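(* Let $C$ be a nontrivial group and let $A_1,B_1,A_2,B_2$ be $C$-groups with $A_1\cap B_1=A_2\cap B_2=C$ (the designated copy of $C$). If $\mathcal{F}_{\mathcal{L}_C}(A_1)\equiv\mathcal{F}_{\mathcal{L}_C}(A_2)$ and $\mathcal{F}_{\mathcal{L}_C}(B_1)\equiv\mathcal{F}_{\mathcal{L}_C}(B_2)$, then the amalgamated free products $A_1*_CB_1$ and $A_2*_CB_2$ are existentially equivalent in the language $\mathcal{L}_C$, and hence also in the language of groups.
   Context: The language $\mathcal{L}_C$ of $C$-groups has a constant symbol $d_c$ for each $c\in C$, a binary function $\cdot$, a unary function $^{-1}$ and a unary predicate $\delta$. A $C$-group is a group $H$ in this language satisfying all closed atomic formulas and negations of closed atomic formulas true in $C$ (so $c\mapsto d_c$ embeds $C$ as a subgroup, the designated copy of $C$), together with the axioms $d_c\in\delta$ and $\forall x(x\notin\delta\rightarrow x\neq d_c)$ for all $c\in C$. For $\mathcal{L}_C$-structures, an $\mathcal{L}_C$-isomorphism between subsets $S,T$ is a bijection $\phi:S\to T$ such that $\phi$ and $\phi^{-1}$ fix constants lying in the set, preserve $\delta$, and satisfy $\phi(f(s_1,\dots,s_n))=f(\phi(s_1),\dots,\phi(s_n))$ whenever the $s_i$ and $f(s_1,\dots,s_n)$ lie in $S$ (symmetrically for $\phi^{-1}$). $\mathcal{F}_{\mathcal{L}_C}(X)\equiv\mathcal{F}_{\mathcal{L}_C}(Y)$ means that every finite subset of $X$ is $\mathcal{L}_C$-isomorphic to a finite subset of $Y$ and vice versa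 (i.e. there is a bijection between isomorphism classes of finite subsets matching isomorphic ones). $A_i*_CB_i$ is regarded as a $C$-group via the common copy of $C$. *)

theory Defs
  imports "HOL-Algebra.Group"
begin

text \<open>A C-group: a group G with an injective homomorphism e : C -> G (the designated
copy of C). The constant d_c is interpreted as e c and the predicate delta as the
designated copy e ` carrier C.\<close>

definition is_cgroup :: "'c monoid \<Rightarrow> ('g, 'm) monoid_scheme \<Rightarrow> ('c \<Rightarrow> 'g) \<Rightarrow> bool" where
  "is_cgroup C G e \<longleftrightarrow> group G \<and> e \<in> hom C G \<and> inj_on e (carrier C)"

definition lc_pres ::
  "'c monoid \<Rightarrow> ('g, 'm1) monoid_scheme \<Rightarrow> ('c \<Rightarrow> 'g) \<Rightarrow>
   ('h, 'm2) monoid_scheme \<Rightarrow> ('c \<Rightarrow> 'h) \<Rightarrow> 'g set \<Rightarrow> ('g \<Rightarrow> 'h) \<Rightarrow> bool" where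
  "lc_pres C G e H e' S \<phi> \<longleftrightarrow>
     (\<forall>c \<in> carrier C. e c \<in> S \<longrightarrow> \<phi> (e c) = e' c) \<and>
     (\<forall>s \<in> S. s \<in> e ` carrier C \<longrightarrow> \<phi> s \<in> e' ` carrier C) \<and>
     (\<forall>s1 \<in> S. \<forall>s2 \<in> S. s1 \<otimes>\<^bsub>G\<^esub> s2 \<in> S \<longrightarrow> \<phi> (s1 \<otimes>\<^bsub>G\<^esub> s2) = \<phi> s1 \<otimes>\<^bsub>H\<^esub> \<phi> s2) \<and>
     (\<forall>s \<in> S. inv\<^bsub>G\<^esub> s \<in> S \<longrightarrow> \<phi> (inv\<^bsub>G\<^esub> s) = inv\<^bsub>H\<^esub> (\<phi> s))"

definition lc_iso ::
  "'c monoid \<Rightarrow> ('g, 'm1) monoid_scheme \<Rightarrow> ('c \<Rightarrow> 'g) \<Rightarrow>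
   ('h, 'm2) monoid_scheme \<Rightarrow> ('c \<Rightarrow> 'h) \<Rightarrow> 'g set \<Rightarrow> 'h set \<Rightarrow> ('g \<Rightarrow> 'h) \<Rightarrow> bool" where
  "lc_iso C G e H e' S T \<phi> \<longleftrightarrow>
     bij_betw \<phi> S T \<and> lc_pres C G e H e' S \<phi> \<and> lc_pres C H e' G e T (inv_into S \<phi>)"

text \<open>F_{L_C}(G) == F_{L_C}(H): every finite subset of G is L_C-isomorphic to a finite
subset of H and vice versa.\<close>

definition lc_fin_equiv ::
  "'c monoid \<Rightarrow> ('g, 'm1) monoid_scheme \<Rightarrow> ('c \<Rightarrow> 'g) \<Rightarrow>
   ('h, 'm2) monoid_scheme \<Rightarrow> ('c \<Rightarrow> 'h) \<Rightarrow> bool" where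
  "lc_fin_equiv C G e H e' \<longleftrightarrow>
     (\<forall>S. S \<subseteq> carrier G \<and> finite S \<longrightarrow>
        (\<exists>T \<phi>. T \<subseteq> carrier H \<and> finite T \<and> lc_iso C G e H e' S T \<phi>)) \<and>
     (\<forall>T. T \<subseteq> carrier H \<and> finite T \<longrightarrow>
        (\<exists>S \<psi>. S \<subseteq> carrier G \<and> finite S \<and> lc_iso C H e' G e T S \<psi>))"

text \<open>Since A and B share the designated copy of C as a common subset, the two copies of C
are identified.\<close>

inductive amal_rel :: "'a monoid \<Rightarrow> 'a monoid \<Rightarrow> 'a list \<Rightarrow> 'a list \<Rightarrow> bool"
  for A B :: "'a monoid" where
  amal_refl: "w \<in> lists (carrier A \<union> carrier B) \<Longrightarrow> amal_rel A B w w"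
| amal_sym: "amal_rel A B u v \<Longrightarrow> amal_rel A B v u"
| amal_trans: "amal_rel A B u v \<Longrightarrow> amal_rel A B v w \<Longrightarrow> amal_rel A B u w"
| amal_ctx: "amal_rel A B u v \<Longrightarrow> xs \<in> lists (carrier A \<union> carrier B) \<Longrightarrow>
     ys \<in> lists (carrier A \<union> carrier B) \<Longrightarrow> amal_rel A B (xs @ u @ ys) (xs @ v @ ys)"
| amal_multA: "a \<in> carrier A \<Longrightarrow> b \<in> carrier A \<Longrightarrow> amal_rel A B [a, b] [a \<otimes>\<^bsub>A\<^esub> b]"
| amal_multB: "a \<in> carrier B \<Longrightarrow> b \<in> carrier B \<Longrightarrow> amal_rel A B [a, b] [a \<otimes>\<^bsub>B\<^esub> b]"
| amal_oneA: "amal_rel A B [\<one>\<^bsub>A\<^esub>] []"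
| amal_oneB: "amal_rel A B [\<one>\<^bsub>B\<^esub>] []"

definition amal_prod :: "'a monoid \<Rightarrow> 'a monoid \<Rightarrow> 'a list set monoid" where
  "amal_prod A B =
     \<lparr> carrier = lists (carrier A \<union> carrier B) // {(u, v). amal_rel A B u v},
       mult = (\<lambda>X Y. {w. \<exists>u \<in> X. \<exists>v \<in> Y. amal_rel A B (u @ v) w}),
       one = {w. amal_rel A B [] w} \<rparr>"

definition amal_emb :: "'a monoid \<Rightarrow> 'a monoid \<Rightarrow> ('c \<Rightarrow> 'a) \<Rightarrow> 'c \<Rightarrow> 'a list set" where
  "amal_emb A B e c = {w. amal_rel A B [e c] w}"

datatype 'c lterm = LVar nat | LConst 'c | LMul "'c lterm" "'c lterm" | LInv "'c lterm"

datatype 'c lform = LEq "'c lterm" "'c lterm" | LDelta "'c lterm"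
  | LNot "'c lform" | LAnd "'c lform" "'c lform" | LOr "'c lform" "'c lform"

fun lterm_consts :: "'c lterm \<Rightarrow> 'c set" where
  "lterm_consts (LVar i) = {}"
| "lterm_consts (LConst c) = {c}"
| "lterm_consts (LMul s t) = lterm_consts s \<union> lterm_consts t"
| "lterm_consts (LInv t) = lterm_consts t"

fun lform_consts :: "'c lform \<Rightarrow> 'c set" where
  "lform_consts (LEq s t) = lterm_consts s \<union> lterm_consts t"
| "lform_consts (LDelta t) = lterm_consts t"
| "lform_consts (LNot f) = lform_consts f"
| "lform_consts (LAnd f g) = lform_consts f \<union> lform_consts g"
| "lform_consts (LOr f g) = lform_consts f \<union> lform_consts g"

fun lform_has_delta :: "'c lform \<Rightarrow> bool" where
  "lform_has_delta (LEq s t) = False"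
| "lform_has_delta (LDelta t) = True"
| "lform_has_delta (LNot f) = lform_has_delta f"
| "lform_has_delta (LAnd f g) = (lform_has_delta f \<or> lform_has_delta g)"
| "lform_has_delta (LOr f g) = (lform_has_delta f \<or> lform_has_delta g)"

definition is_lc_form :: "'c monoid \<Rightarrow> 'c lform \<Rightarrow> bool" where
  "is_lc_form C \<phi> \<longleftrightarrow> lform_consts \<phi> \<subseteq> carrier C"

definition is_group_form :: "'c lform \<Rightarrow> bool" where
  "is_group_form \<phi> \<longleftrightarrow> lform_consts \<phi> = {} \<and> \<not> lform_has_delta \<phi>"

fun teval :: "('g, 'm) monoid_scheme \<Rightarrow> ('c \<Rightarrow> 'g) \<Rightarrow> (nat \<Rightarrow> 'g) \<Rightarrow> 'c lterm \<Rightarrow> 'g" where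
  "teval G e \<sigma> (LVar i) = \<sigma> i"
| "teval G e \<sigma> (LConst c) = e c"
| "teval G e \<sigma> (LMul s t) = teval G e \<sigma> s \<otimes>\<^bsub>G\<^esub> teval G e \<sigma> t"
| "teval G e \<sigma> (LInv t) = inv\<^bsub>G\<^esub> (teval G e \<sigma> t)"

fun fsat :: "('g, 'm) monoid_scheme \<Rightarrow> ('c \<Rightarrow> 'g) \<Rightarrow> 'g set \<Rightarrow> (nat \<Rightarrow> 'g) \<Rightarrow> 'c lform \<Rightarrow> bool" where
  "fsat G e D \<sigma> (LEq s t) = (teval G e \<sigma> s = teval G e \<sigma> t)"
| "fsat G e D \<sigma> (LDelta t) = (teval G e \<sigma> t \<in> D)"
| "fsat G e D \<sigma> (LNot f) = (\<not> fsat G e D \<sigma> f)"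
| "fsat G e D \<sigma> (LAnd f g) = (fsat G e D \<sigma> f \<and> fsat G e D \<sigma> g)"
| "fsat G e D \<sigma> (LOr f g) = (fsat G e D \<sigma> f \<or> fsat G e D \<sigma> g)"

definition ex_holds :: "'c monoid \<Rightarrow> ('g, 'm) monoid_scheme \<Rightarrow> ('c \<Rightarrow> 'g) \<Rightarrow> 'c lform \<Rightarrow> bool" where
  "ex_holds C G e \<phi> \<longleftrightarrow> (\<exists>\<sigma>. (\<forall>i. \<sigma> i \<in> carrier G) \<and> fsat G e (e ` carrier C) \<sigma> \<phi>)"

definition lc_exist_equiv ::
  "'c monoid \<Rightarrow> ('g, 'm1) monoid_scheme \<Rightarrow> ('c \<Rightarrow> 'g) \<Rightarrow>
   ('h, 'm2) monoid_scheme \<Rightarrow> ('c \<Rightarrow> 'h) \<Rightarrow> bool" where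
  "lc_exist_equiv C G e H e' \<longleftrightarrow>
     (\<forall>\<phi>. is_lc_form C \<phi> \<longrightarrow> (ex_holds C G e \<phi> \<longleftrightarrow> ex_holds C H e' \<phi>))"

definition group_exist_equiv ::
  "'c monoid \<Rightarrow> ('g, 'm1) monoid_scheme \<Rightarrow> ('h, 'm2) monoid_scheme \<Rightarrow> bool" where
  "group_exist_equiv C G H \<longleftrightarrow>
     (\<forall>\<phi> :: 'c lform. is_group_form \<phi> \<longrightarrow>
        ((\<exists>\<sigma>. (\<forall>i. \<sigma> i \<in> carrier G) \<and> fsat G (\<lambda>_. undefined) {} \<sigma> \<phi>) \<longleftrightarrow>
         (\<exists>\<sigma>. (\<forall>i. \<sigma> i \<in> carrier H) \<and> fsat H (\<lambda>_. undefined) {} \<sigma> \<phi>)))"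

end

theory Submission
  imports Defs "HOL-Algebra.Coset"
begin

(* An existential L_C-sentence holds in A *_C B iff a finite system of conditions
   "u ~ v", "not u ~ v", "u represents an element of C" (and negations) is solvable by words over
   the letters of A and B, where ~ is the defining congruence of the amalgam.  By the normal form
   theorem for amalgamated free products, each such condition on a word w is decided by a normal
   form n of w: a single letter of C, or a reduced alternating word (which is never trivial and
   never in C).  A derivation of w ~ n uses only finitely many letters and multiplication-table
   entries of A and B.  Collecting, for the finitely many relevant words, all these letters in a
   finite set F and gluing L_C-isomorphisms of F \<inter> A1 and F \<inter> B1 onto finite subsets of A2 and
   B2 gives a letter map that transports the derivations and the normal forms, hence the solution. *)

text \<open>Formal inverses of letters and words; the inverse of a letter is taken in the factor
  it belongs to (on the common subgroup both factors agree).\<close>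

definition letter_inv :: "'a monoid \<Rightarrow> 'a monoid \<Rightarrow> 'a \<Rightarrow> 'a" where
  "letter_inv A B x = (if x \<in> carrier A then inv\<^bsub>A\<^esub> x else inv\<^bsub>B\<^esub> x)"

definition word_inv :: "'a monoid \<Rightarrow> 'a monoid \<Rightarrow> 'a list \<Rightarrow> 'a list" where
  "word_inv A B w = rev (map (letter_inv A B) w)"

definition word_class :: "'a monoid \<Rightarrow> 'a monoid \<Rightarrow> 'a list \<Rightarrow> 'a list set" where
  "word_class A B w = {v. amal_rel A B w v}"

locale amal =
  fixes C :: "'c monoid" and A B :: "'a monoid" and e :: "'c \<Rightarrow> 'a"
  assumes group_C: "group C" and cgroup_A: "is_cgroup C A e" and cgroup_B: "is_cgroup C B e"
    and inter: "carrier A \<inter> carrier B = e ` carrier C"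
begin

abbreviation "H \<equiv> e ` carrier C"
abbreviation "L \<equiv> lists (carrier A \<union> carrier B)"
abbreviation "rel \<equiv> amal_rel A B"

lemma group_A: "group A" and group_B: "group B"
  using cgroup_A cgroup_B by (simp_all add: is_cgroup_def)

lemma hom_A: "group_hom C A e" and hom_B: "group_hom C B e"
  using cgroup_A cgroup_B group_C
  by (simp_all add: is_cgroup_def group_hom_def group_hom_axioms_def)

lemma inj_e: "inj_on e (carrier C)"
  using cgroup_A by (simp add: is_cgroup_def)

lemma H_subgroup_A: "subgroup H A" and H_subgroup_B: "subgroup H B"
  using group_hom.img_is_subgroup hom_A hom_B by blast+

lemma one_A: "\<one>\<^bsub>A\<^esub> = e \<one>\<^bsub>C\<^esub>" and one_B: "\<one>\<^bsub>B\<^esub> = e \<one>\<^bsub>C\<^esub>"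
  using hom_A hom_B group_hom.hom_one by metis+

lemma H_carrier_A: "H \<subseteq> carrier A" and H_carrier_B: "H \<subseteq> carrier B"
  using inter by blast+

lemma one_in_H: "\<one>\<^bsub>A\<^esub> \<in> H"
  using one_A group.is_monoid[OF group_C] monoid.one_closed by blast

lemma mult_H_agree:
  assumes "x \<in> H" "y \<in> H" shows "x \<otimes>\<^bsub>A\<^esub> y = x \<otimes>\<^bsub>B\<^esub> y"
proof -
  obtain a b where "a \<in> carrier C" "b \<in> carrier C" "x = e a" "y = e b" using assms by blast
  then show ?thesis using hom_A hom_B group_hom.hom_mult by metis
qed

text \<open>Statements about "a factor X" are made once for X = A and X = B simultaneously.\<close>
lemma factor:
  assumes "X = A \<or> X = B"
  shows "group X" "subgroup H X" "H \<subseteq> carrier X" "\<one>\<^bsub>X\<^esub> = \<one>\<^bsub>A\<^esub>"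
  using assms group_A group_B H_subgroup_A H_subgroup_B inter one_A one_B by auto

lemma rel_lists: "rel u v \<Longrightarrow> u \<in> L \<and> v \<in> L"
proof (induction rule: amal_rel.induct)
  case (amal_multA a b) then show ?case using group_A group.is_monoid monoid.m_closed by fastforce
next
  case (amal_multB a b) then show ?case using group_B group.is_monoid monoid.m_closed by fastforce
next
  case amal_oneA then show ?case using group_A group.is_monoid monoid.one_closed by fastforce
next
  case amal_oneB then show ?case using group_B group.is_monoid monoid.one_closed by fastforce
qed auto

lemma rel_app: "rel u u' \<Longrightarrow> rel v v' \<Longrightarrow> rel (u @ v) (u' @ v')"
proof -
  assume u: "rel u u'" and v: "rel v v'"
  have "rel ([] @ u @ v) ([] @ u' @ v)" using amal_ctx[OF u, of "[]" v] rel_lists[OF v] by auto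
  moreover have "rel (u' @ v @ []) (u' @ v' @ [])" using amal_ctx[OF v, of u' "[]"] rel_lists[OF u] by auto
  ultimately show ?thesis using amal_trans by fastforce
qed

lemma rel_cons: "rel u u' \<Longrightarrow> x \<in> carrier A \<union> carrier B \<Longrightarrow> rel (x # u) (x # u')"
  using rel_app[of "[x]" "[x]" u u'] amal_refl[of "[x]"] by auto

lemma rel_mult_factor:
  assumes "X = A \<or> X = B" "x \<in> carrier X" "y \<in> carrier X"
  shows "rel [x, y] [x \<otimes>\<^bsub>X\<^esub> y]"
  using assms(1)
proof
  assume "X = A" then show ?thesis using assms(2,3) amal_multA by simp
next
  assume "X = B" then show ?thesis using assms(2,3) amal_multB by simp
qed

lemma word_class_eq: "u \<in> L \<Longrightarrow> word_class A B u = word_class A B v \<longleftrightarrow> rel u v"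
proof
  assume "u \<in> L" "word_class A B u = word_class A B v"
  then show "rel u v" using amal_refl[of u A B] amal_sym unfolding word_class_def by blast
next
  assume "rel u v"
  then show "word_class A B u = word_class A B v" unfolding word_class_def
    by (auto intro: amal_trans amal_sym)
qed

lemma carrier_amal: "carrier (amal_prod A B) = word_class A B ` L"
  unfolding amal_prod_def quotient_def word_class_def by auto

lemma mult_amal:
  "u \<in> L \<Longrightarrow> v \<in> L \<Longrightarrow>
    word_class A B u \<otimes>\<^bsub>amal_prod A B\<^esub> word_class A B v = word_class A B (u @ v)"
proof -
  assume u: "u \<in> L" and v: "v \<in> L"
  have "rel (u' @ v') w \<longleftrightarrow> rel (u @ v) w" if "rel u u'" "rel v v'" for u' v' w
    using rel_app[OF that] amal_trans amal_sym by metis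
  moreover have "rel u u" "rel v v" using u v by (simp_all add: amal_refl)
  ultimately show ?thesis unfolding amal_prod_def word_class_def by auto
qed

lemma one_amal: "\<one>\<^bsub>amal_prod A B\<^esub> = word_class A B []"
  unfolding amal_prod_def word_class_def by simp

lemma emb_amal: "amal_emb A B e c = word_class A B [e c]"
  unfolding amal_emb_def word_class_def by simp

lemma letter_inv_closed: "x \<in> carrier A \<union> carrier B \<Longrightarrow> letter_inv A B x \<in> carrier A \<union> carrier B"
  unfolding letter_inv_def using group_A group_B group.inv_closed by fastforce

lemma rel_letter_inv:
  assumes x: "x \<in> carrier A \<union> carrier B"
  shows "rel [x, letter_inv A B x] [] \<and> rel [letter_inv A B x, x] []"
proof -
  define X where "X = (if x \<in> carrier A then A else B)"
  have X: "X = A \<or> X = B" and xX: "x \<in> carrier X" and li: "letter_inv A B x = inv\<^bsub>X\<^esub> x"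
    using x by (auto simp: X_def letter_inv_def)
  interpret X: group X using factor(1)[OF X] .
  have one: "rel [\<one>\<^bsub>X\<^esub>] []" using X amal_oneA[of A B] amal_oneB[of A B] by auto
  have r: "rel [x, inv\<^bsub>X\<^esub> x] [\<one>\<^bsub>X\<^esub>]" "rel [inv\<^bsub>X\<^esub> x, x] [\<one>\<^bsub>X\<^esub>]"
    using rel_mult_factor[OF X xX X.inv_closed[OF xX]] rel_mult_factor[OF X X.inv_closed[OF xX] xX] xX
    by simp_all
  show ?thesis unfolding li using amal_trans[OF r(1) one] amal_trans[OF r(2) one] ..
qed

lemma word_inv_lists: "w \<in> L \<Longrightarrow> word_inv A B w \<in> L"
proof -
  assume "w \<in> L"
  then have "\<forall>x\<in>set w. letter_inv A B x \<in> carrier A \<union> carrier B"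
    using letter_inv_closed by (simp add: in_lists_conv_set)
  then show ?thesis by (simp add: word_inv_def in_lists_conv_set)
qed

lemma rel_word_inv: "w \<in> L \<Longrightarrow> rel (w @ word_inv A B w) [] \<and> rel (word_inv A B w @ w) []"
proof (induction w)
  case Nil then show ?case by (simp add: word_inv_def amal_refl)
next
  case (Cons x w)
  have x: "x \<in> carrier A \<union> carrier B" and w: "w \<in> L" using Cons.prems by auto
  have wi: "word_inv A B (x # w) = word_inv A B w @ [letter_inv A B x]" by (simp add: word_inv_def)
  have lx: "[letter_inv A B x] \<in> L" using letter_inv_closed x by simp
  have "rel ((x # w) @ word_inv A B (x # w)) ([x] @ [] @ [letter_inv A B x])"
    using wi rel_app[OF rel_app[OF amal_refl[of "[x]"] conjunct1[OF Cons.IH[OF w]]] amal_refl[OF lx]] x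
    by simp
  moreover have "rel (word_inv A B (x # w) @ x # w) (word_inv A B w @ [] @ w)"
    using wi amal_ctx[OF conjunct2[OF rel_letter_inv[OF x]], of "word_inv A B w" w] word_inv_lists[OF w] w
    by simp
  ultimately show ?case using rel_letter_inv[OF x] conjunct2[OF Cons.IH[OF w]] amal_trans by fastforce
qed

lemma inv_amal: "w \<in> L \<Longrightarrow> inv\<^bsub>amal_prod A B\<^esub> (word_class A B w) = word_class A B (word_inv A B w)"
proof -
  assume w: "w \<in> L"
  let ?P = "amal_prod A B" and ?c = "word_class A B"
  have wi: "word_inv A B w \<in> L" using word_inv_lists w .
  show ?thesis unfolding m_inv_def
  proof (rule the_equality)
    show "?c (word_inv A B w) \<in> carrier ?P \<and> ?c w \<otimes>\<^bsub>?P\<^esub> ?c (word_inv A B w) = \<one>\<^bsub>?P\<^esub>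
        \<and> ?c (word_inv A B w) \<otimes>\<^bsub>?P\<^esub> ?c w = \<one>\<^bsub>?P\<^esub>"
    proof (intro conjI)
      show "?c (word_inv A B w) \<in> carrier ?P" using carrier_amal wi by simp
      show "?c w \<otimes>\<^bsub>?P\<^esub> ?c (word_inv A B w) = \<one>\<^bsub>?P\<^esub>" "?c (word_inv A B w) \<otimes>\<^bsub>?P\<^esub> ?c w = \<one>\<^bsub>?P\<^esub>"
        using mult_amal[OF w wi] mult_amal[OF wi w] one_amal rel_word_inv[OF w] word_class_eq
          append_in_lists_conv w wi by simp_all
    qed
  next
    fix y assume y: "y \<in> carrier ?P \<and> ?c w \<otimes>\<^bsub>?P\<^esub> y = \<one>\<^bsub>?P\<^esub> \<and> y \<otimes>\<^bsub>?P\<^esub> ?c w = \<one>\<^bsub>?P\<^esub>"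
    then obtain v where v: "v \<in> L" "y = ?c v" using carrier_amal by auto
    have "rel (w @ v) []" using y v(1) w mult_amal one_amal word_class_eq unfolding v(2) by simp
    then have "rel (word_inv A B w @ (w @ v)) (word_inv A B w @ [])"
      using rel_app[OF amal_refl[OF wi]] by blast
    moreover have "rel ((word_inv A B w @ w) @ v) ([] @ v)"
      using rel_app[OF conjunct2[OF rel_word_inv[OF w]] amal_refl[OF v(1)]] .
    ultimately have "rel v (word_inv A B w)" using amal_trans amal_sym by fastforce
    then show "y = ?c (word_inv A B w)" using v word_class_eq by metis
  qed
qed

lemma rel_iff_trivial_quotient:
  assumes u: "u \<in> L" and v: "v \<in> L"
  shows "rel u v \<longleftrightarrow> rel (u @ word_inv A B v) []"
proof
  assume "rel u v"
  then have "rel (u @ word_inv A B v) (v @ word_inv A B v)"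
    using rel_app amal_refl[OF word_inv_lists[OF v]] by simp
  then show "rel (u @ word_inv A B v) []" using conjunct1[OF rel_word_inv[OF v]] by (rule amal_trans)
next
  assume r: "rel (u @ word_inv A B v) []"
  have "rel (u @ []) (u @ (word_inv A B v @ v))"
    using rel_app[OF amal_refl[OF u] amal_sym[OF conjunct2[OF rel_word_inv[OF v]]]] .
  moreover have "rel ((u @ word_inv A B v) @ v) ([] @ v)" using rel_app[OF r amal_refl[OF v]] .
  ultimately show "rel u v" using amal_trans by fastforce
qed

end

section \<open>The normal form theorem\<close>

definition coset_rep :: "('g, 'm) monoid_scheme \<Rightarrow> 'g set \<Rightarrow> 'g \<Rightarrow> 'g" where
  "coset_rep G H x = (SOME y. y \<in> H #>\<^bsub>G\<^esub> x)"

context group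
begin

lemma mult_in_subgroup_iff:
  assumes H: "subgroup H G" and h: "h \<in> H" and y: "y \<in> carrier G"
  shows "h \<otimes> y \<in> H \<longleftrightarrow> y \<in> H" and "y \<otimes> h \<in> H \<longleftrightarrow> y \<in> H"
proof -
  interpret H: subgroup H G by (rule H)
  have hG: "h \<in> carrier G" using h by simp
  have "y = inv h \<otimes> (h \<otimes> y)" "y = (y \<otimes> h) \<otimes> inv h"
    using hG y by (simp_all add: m_assoc[symmetric] m_assoc)
  then show "h \<otimes> y \<in> H \<longleftrightarrow> y \<in> H" "y \<otimes> h \<in> H \<longleftrightarrow> y \<in> H"
    using h by (metis H.m_closed H.m_inv_closed)+
qed

context
  fixes H assumes H: "subgroup H G"
begin

lemma coset_rep_in_coset: "x \<in> carrier G \<Longrightarrow> coset_rep G H x \<in> H #> x"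
  unfolding coset_rep_def by (rule someI) (rule rcos_self[OF _ H])

lemma coset_rep_closed: "x \<in> carrier G \<Longrightarrow> coset_rep G H x \<in> carrier G"
  using coset_rep_in_coset r_coset_subset_G subgroup.subset[OF H] by blast

lemma coset_rep_coset: "x \<in> carrier G \<Longrightarrow> H #> coset_rep G H x = H #> x"
  using repr_independence[OF coset_rep_in_coset _ H] by simp

lemma coset_rep_left_mult: "h \<in> H \<Longrightarrow> x \<in> carrier G \<Longrightarrow> coset_rep G H (h \<otimes> x) = coset_rep G H x"
  using repr_independence[OF rcosI _ H] subgroup.subset[OF H] by (simp add: coset_rep_def)

lemma coset_rep_idem: "x \<in> carrier G \<Longrightarrow> coset_rep G H (coset_rep G H x) = coset_rep G H x"
  using coset_rep_coset by (simp add: coset_rep_def)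

lemma coset_rep_in_subgroup_iff:
  assumes x: "x \<in> carrier G" shows "coset_rep G H x \<in> H \<longleftrightarrow> x \<in> H"
proof
  assume "coset_rep G H x \<in> H"
  then have "H #> x = H" using coset_rep_coset[OF x] coset_join2[OF coset_rep_closed[OF x] H] by simp
  then show "x \<in> H" using rcos_self[OF x H] by simp
next
  assume "x \<in> H"
  then show "coset_rep G H x \<in> H" using coset_rep_in_coset[OF x] coset_join2[OF x H] by simp
qed

lemma coset_rep_quotient:
  assumes x: "x \<in> carrier G" shows "x \<otimes> inv (coset_rep G H x) \<in> H"
proof -
  have "x \<in> H #> coset_rep G H x" using coset_rep_coset[OF x] rcos_self[OF x H] by simp
  then show ?thesis using subgroup.rcos_module_imp[OF H is_group coset_rep_closed[OF x]] by simp
qed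

end

end

fun alternating :: "'a monoid \<Rightarrow> 'a list \<Rightarrow> bool" where
  "alternating A [] = True"
| "alternating A [x] = True"
| "alternating A (x # y # r) = ((x \<in> carrier A) \<noteq> (y \<in> carrier A) \<and> alternating A (y # r))"

lemma alternating_tl: "alternating A ts \<Longrightarrow> alternating A (tl ts)"
  by (cases ts rule: remdups_adj.cases) auto

lemma alternating_replace_hd:
  "(z \<in> carrier A) = (y \<in> carrier A) \<Longrightarrow> alternating A (y # r) \<Longrightarrow> alternating A (z # r)"
  by (cases r) auto

definition reduced :: "'a monoid \<Rightarrow> 'a monoid \<Rightarrow> 'a set \<Rightarrow> 'a list \<Rightarrow> bool" where
  "reduced A B H r \<longleftrightarrow> r \<noteq> [] \<and> set r \<subseteq> (carrier A \<union> carrier B) - H \<and> alternating A r"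

lemma reduced_tl: "reduced A B H (x # r) \<Longrightarrow> r \<noteq> [] \<Longrightarrow> reduced A B H r"
  unfolding reduced_def using alternating_tl[of A "x # r"] by auto

text \<open>The amalgam acts on states (c, ts): c in H and ts an alternating sequence of chosen
  coset representatives outside H.  A letter a of a factor X acts by merging it into the
  leading X-part of the state and renormalising.  Equivalent words act equally, and a
  reduced word moves the empty state to a state with a nonempty sequence.\<close>

context amal
begin

abbreviation "rep X \<equiv> coset_rep X H"

definition rep_seq :: "'a list \<Rightarrow> bool" where
  "rep_seq ts \<longleftrightarrow> set ts \<subseteq> (carrier A \<union> carrier B) - H
     \<and> (\<forall>t\<in>set ts. t \<in> carrier A \<longrightarrow> rep A t = t)
     \<and> (\<forall>t\<in>set ts. t \<in> carrier B \<longrightarrow> rep B t = t) \<and> alternating A ts"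

definition state :: "'a \<times> 'a list \<Rightarrow> bool" where
  "state \<omega> \<longleftrightarrow> fst \<omega> \<in> H \<and> rep_seq (snd \<omega>)"

lemma rep_seq_tl: "rep_seq ts \<Longrightarrow> rep_seq (tl ts)"
  unfolding rep_seq_def using alternating_tl[of A ts] by (cases ts) auto

lemma rep_seq_next_other_factor:
  assumes X: "X = A \<or> X = B" and v: "rep_seq (x # r)" and xX: "x \<in> carrier X"
  shows "r = [] \<or> hd r \<notin> carrier X"
proof (cases r)
  case (Cons y r')
  then have "(x \<in> carrier A) \<noteq> (y \<in> carrier A)" "x \<in> carrier A \<union> carrier B" "x \<notin> H"
    "y \<in> carrier A \<union> carrier B" "y \<notin> H"
    using v unfolding rep_seq_def by auto
  then show ?thesis using X xX Cons inter by auto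
qed simp

definition normalize :: "'a monoid \<Rightarrow> 'a \<Rightarrow> 'a list \<Rightarrow> 'a \<times> 'a list" where
  "normalize X g ts = (if g \<in> H then (g, ts) else (g \<otimes>\<^bsub>X\<^esub> inv\<^bsub>X\<^esub> (rep X g), rep X g # ts))"

definition split_head :: "'a monoid \<Rightarrow> 'a \<times> 'a list \<Rightarrow> 'a \<times> 'a list" where
  "split_head X \<omega> = (if snd \<omega> \<noteq> [] \<and> hd (snd \<omega>) \<in> carrier X
      then (fst \<omega> \<otimes>\<^bsub>X\<^esub> hd (snd \<omega>), tl (snd \<omega>)) else \<omega>)"

definition act :: "'a monoid \<Rightarrow> 'a \<Rightarrow> 'a \<times> 'a list \<Rightarrow> 'a \<times> 'a list" where
  "act X a \<omega> = normalize X (a \<otimes>\<^bsub>X\<^esub> fst (split_head X \<omega>)) (snd (split_head X \<omega>))"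

lemma split_head_props:
  assumes X: "X = A \<or> X = B" and v: "state \<omega>"
  shows "fst (split_head X \<omega>) \<in> carrier X \<and> rep_seq (snd (split_head X \<omega>))
     \<and> (snd (split_head X \<omega>) = [] \<or> hd (snd (split_head X \<omega>)) \<notin> carrier X)"
proof -
  interpret X: group X using factor(1)[OF X] .
  have c: "fst \<omega> \<in> carrier X" and vt: "rep_seq (snd \<omega>)"
    using v factor(3)[OF X] unfolding state_def by auto
  show ?thesis
  proof (cases "snd \<omega> \<noteq> [] \<and> hd (snd \<omega>) \<in> carrier X")
    case True
    then obtain x r where "snd \<omega> = x # r" "x \<in> carrier X" by (cases "snd \<omega>") auto
    then show ?thesis using c vt rep_seq_tl[OF vt] rep_seq_next_other_factor[OF X]
      unfolding split_head_def by auto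
  next
    case False
    then show ?thesis using c vt unfolding split_head_def by auto
  qed
qed

lemma normalize_state:
  assumes X: "X = A \<or> X = B" and g: "g \<in> carrier X" and vr: "rep_seq rest"
    and hr: "rest = [] \<or> hd rest \<notin> carrier X"
  shows "state (normalize X g rest)"
proof (cases "g \<in> H")
  case True
  then show ?thesis using vr unfolding normalize_def state_def by simp
next
  case False
  interpret X: group X using factor(1)[OF X] .
  note sub = factor(2)[OF X]
  let ?r = "rep X g"
  have rX: "?r \<in> carrier X" and rH: "?r \<notin> H" and rr: "rep X ?r = ?r"
    and q: "g \<otimes>\<^bsub>X\<^esub> inv\<^bsub>X\<^esub> ?r \<in> H"
    using X.coset_rep_closed[OF sub g] X.coset_rep_in_subgroup_iff[OF sub g] False
      X.coset_rep_idem[OF sub g] X.coset_rep_quotient[OF sub g] by auto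
  have alt: "alternating A (?r # rest)"
  proof (cases rest)
    case (Cons y r)
    have "y \<in> carrier A \<union> carrier B" "y \<notin> carrier X" "alternating A (y # r)"
      using vr hr Cons unfolding rep_seq_def by auto
    then show ?thesis using Cons X rX rH inter by auto
  qed simp
  have "?r \<in> (carrier A \<union> carrier B) - H" "?r \<in> carrier A \<longrightarrow> rep A ?r = ?r"
    "?r \<in> carrier B \<longrightarrow> rep B ?r = ?r"
    using X rX rH rr inter by auto
  then show ?thesis using False q alt vr unfolding normalize_def state_def rep_seq_def by auto
qed

lemma split_head_normalize:
  assumes X: "X = A \<or> X = B" and g: "g \<in> carrier X" and hr: "rest = [] \<or> hd rest \<notin> carrier X"
  shows "split_head X (normalize X g rest) = (g, rest)"
proof (cases "g \<in> H")
  case True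
  then show ?thesis using hr unfolding normalize_def split_head_def by auto
next
  case False
  interpret X: group X using factor(1)[OF X] .
  have rX: "rep X g \<in> carrier X" using X.coset_rep_closed[OF factor(2)[OF X] g] .
  then have "g \<otimes>\<^bsub>X\<^esub> inv\<^bsub>X\<^esub> rep X g \<otimes>\<^bsub>X\<^esub> rep X g = g" using g by (simp add: X.m_assoc)
  then show ?thesis using False rX unfolding normalize_def split_head_def by simp
qed

lemma act_state:
  assumes X: "X = A \<or> X = B" and a: "a \<in> carrier X" and v: "state \<omega>"
  shows "state (act X a \<omega>)"
proof -
  interpret X: group X using factor(1)[OF X] .
  show ?thesis unfolding act_def using split_head_props[OF X v] a
    by (intro normalize_state[OF X]) auto
qed

lemma act_mult:
  assumes X: "X = A \<or> X = B" and a: "a \<in> carrier X" and b: "b \<in> carrier X" and v: "state \<omega>"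
  shows "act X a (act X b \<omega>) = act X (a \<otimes>\<^bsub>X\<^esub> b) \<omega>"
proof -
  interpret X: group X using factor(1)[OF X] .
  have s: "fst (split_head X \<omega>) \<in> carrier X"
    "snd (split_head X \<omega>) = [] \<or> hd (snd (split_head X \<omega>)) \<notin> carrier X"
    using split_head_props[OF X v] by auto
  have "split_head X (act X b \<omega>) = (b \<otimes>\<^bsub>X\<^esub> fst (split_head X \<omega>), snd (split_head X \<omega>))"
    unfolding act_def using s b by (intro split_head_normalize[OF X]) auto
  then show ?thesis using s a b unfolding act_def by (simp add: X.m_assoc)
qed

lemma act_H:
  assumes X: "X = A \<or> X = B" and h: "h \<in> H" and v: "state (c, ts)"
  shows "act X h (c, ts) = (h \<otimes>\<^bsub>X\<^esub> c, ts)"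
proof -
  interpret X: group X using factor(1)[OF X] .
  interpret S: subgroup H X using factor(2)[OF X] .
  have c: "c \<in> H" and vt: "rep_seq ts" using v unfolding state_def by auto
  have hc: "h \<otimes>\<^bsub>X\<^esub> c \<in> H" and hcX: "h \<otimes>\<^bsub>X\<^esub> c \<in> carrier X" using h c by auto
  show ?thesis
  proof (cases "ts \<noteq> [] \<and> hd ts \<in> carrier X")
    case True
    then obtain t r where ts: "ts = t # r" and tX: "t \<in> carrier X" by (cases ts) auto
    have tH: "t \<notin> H" and tr: "rep X t = t" using vt ts X tX unfolding rep_seq_def by auto
    have "h \<otimes>\<^bsub>X\<^esub> (c \<otimes>\<^bsub>X\<^esub> t) = (h \<otimes>\<^bsub>X\<^esub> c) \<otimes>\<^bsub>X\<^esub> t"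
      "(h \<otimes>\<^bsub>X\<^esub> c) \<otimes>\<^bsub>X\<^esub> t \<otimes>\<^bsub>X\<^esub> inv\<^bsub>X\<^esub> t = h \<otimes>\<^bsub>X\<^esub> c"
      using h c tX by (simp_all add: X.m_assoc)
    moreover have "(h \<otimes>\<^bsub>X\<^esub> c) \<otimes>\<^bsub>X\<^esub> t \<notin> H"
      using X.mult_in_subgroup_iff(1)[OF factor(2)[OF X] hc tX] tH by simp
    moreover have "rep X ((h \<otimes>\<^bsub>X\<^esub> c) \<otimes>\<^bsub>X\<^esub> t) = t"
      using X.coset_rep_left_mult[OF factor(2)[OF X] hc tX] tr by simp
    ultimately show ?thesis using ts tX unfolding act_def split_head_def normalize_def by simp
  next
    case False
    then show ?thesis using hc unfolding act_def split_head_def normalize_def by auto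
  qed
qed

lemma act_one:
  assumes X: "X = A \<or> X = B" and v: "state \<omega>"
  shows "act X \<one>\<^bsub>X\<^esub> \<omega> = \<omega>"
proof -
  obtain c ts where w: "\<omega> = (c, ts)" by fastforce
  interpret X: group X using factor(1)[OF X] .
  have "c \<in> carrier X" using v w factor(3)[OF X] unfolding state_def by auto
  then show ?thesis using act_H[OF X _ v[unfolded w]] factor(4)[OF X, symmetric] one_in_H w by simp
qed

lemma act_grow:
  assumes X: "X = A \<or> X = B" and x: "x \<in> carrier X" "x \<notin> H" and v: "state (c, ts)"
    and hts: "ts = [] \<or> hd ts \<notin> carrier X"
  shows "\<exists>c' t. act X x (c, ts) = (c', t # ts) \<and> t \<in> carrier X - H"
proof -
  interpret X: group X using factor(1)[OF X] .
  note sub = factor(2)[OF X]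
  have c: "c \<in> H" using v unfolding state_def by auto
  have cX: "c \<in> carrier X" using c factor(3)[OF X] by auto
  have xc: "x \<otimes>\<^bsub>X\<^esub> c \<in> carrier X" using x cX by simp
  have nH: "x \<otimes>\<^bsub>X\<^esub> c \<notin> H" using X.mult_in_subgroup_iff(2)[OF sub c x(1)] x(2) by simp
  have "split_head X (c, ts) = (c, ts)" using hts unfolding split_head_def by auto
  then show ?thesis using nH X.coset_rep_closed[OF sub xc] X.coset_rep_in_subgroup_iff[OF sub xc]
    unfolding act_def normalize_def by simp
qed

definition act_letter :: "'a \<Rightarrow> 'a \<times> 'a list \<Rightarrow> 'a \<times> 'a list" where
  "act_letter x = (if x \<in> carrier A then act A x else act B x)"

definition act_word :: "'a list \<Rightarrow> 'a \<times> 'a list \<Rightarrow> 'a \<times> 'a list" where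
  "act_word w \<omega> = foldr act_letter w \<omega>"

lemma act_word_Nil [simp]: "act_word [] \<omega> = \<omega>"
  and act_word_Cons [simp]: "act_word (x # w) \<omega> = act_letter x (act_word w \<omega>)"
  and act_word_append: "act_word (u @ v) \<omega> = act_word u (act_word v \<omega>)"
  by (simp_all add: act_word_def)

lemma act_letter_state: "x \<in> carrier A \<union> carrier B \<Longrightarrow> state \<omega> \<Longrightarrow> state (act_letter x \<omega>)"
  unfolding act_letter_def using act_state[of A x \<omega>] act_state[of B x \<omega>] by auto

lemma act_word_state: "w \<in> L \<Longrightarrow> state \<omega> \<Longrightarrow> state (act_word w \<omega>)"
  by (induction w) (auto intro: act_letter_state)

lemma act_letter_B:
  assumes x: "x \<in> carrier B" and v: "state \<omega>"
  shows "act_letter x \<omega> = act B x \<omega>"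
proof (cases "x \<in> carrier A")
  case True
  then have xH: "x \<in> H" using x inter by blast
  obtain c ts where w: "\<omega> = (c, ts)" by fastforce
  have "c \<in> H" using v w unfolding state_def by simp
  then show ?thesis using act_H[of A x c ts] act_H[of B x c ts] xH v w mult_H_agree True
    unfolding act_letter_def by simp
qed (simp add: act_letter_def)

lemma rel_act: "rel u v \<Longrightarrow> state \<omega> \<Longrightarrow> act_word u \<omega> = act_word v \<omega>"
proof (induction arbitrary: \<omega> rule: amal_rel.induct)
  case (amal_ctx u v xs ys)
  then show ?case using act_word_state[of ys \<omega>] by (simp add: act_word_append)
next
  case (amal_multA a b)
  then show ?case using act_mult[of A a b \<omega>] group.is_monoid[OF group_A] monoid.m_closed
    by (fastforce simp: act_letter_def)
next
  case (amal_multB a b)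
  have ab: "a \<otimes>\<^bsub>B\<^esub> b \<in> carrier B" using amal_multB group.is_monoid[OF group_B] monoid.m_closed by fastforce
  have "state (act B b \<omega>)" using act_state[of B b \<omega>] amal_multB by simp
  then show ?case using act_letter_B[OF _ amal_multB.prems] act_letter_B act_mult[of B a b \<omega>]
    act_letter_B[OF ab amal_multB.prems] amal_multB by simp
next
  case amal_oneA
  then show ?case using act_one[of A] group.is_monoid[OF group_A] monoid.one_closed
    by (fastforce simp: act_letter_def)
next
  case amal_oneB
  then show ?case using act_one[of B] act_letter_B group.is_monoid[OF group_B] monoid.one_closed
    by fastforce
qed auto

definition empty_state :: "'a \<times> 'a list" where
  "empty_state = (\<one>\<^bsub>A\<^esub>, [])"

lemma state_empty_state: "state empty_state"
  unfolding empty_state_def state_def rep_seq_def using one_in_H by simp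

lemma act_word_single_H: "h \<in> H \<Longrightarrow> act_word [h] empty_state = (h, [])"
  using act_H[of A h "\<one>\<^bsub>A\<^esub>" "[]"] state_empty_state factor(3)[of A]
    monoid.r_one[OF group.is_monoid[OF group_A]]
  by (auto simp: empty_state_def act_letter_def)

lemma rel_H_one: "h \<in> H \<Longrightarrow> rel [h] [] \<Longrightarrow> h = \<one>\<^bsub>A\<^esub>"
  using rel_act[OF _ state_empty_state, of "[h]" "[]"] act_word_single_H
  by (simp add: empty_state_def)

lemma reduced_act:
  "reduced A B H r \<Longrightarrow> \<exists>c t ts. act_word r empty_state = (c, t # ts) \<and> state (c, t # ts)
     \<and> (t \<in> carrier A \<longleftrightarrow> hd r \<in> carrier A)"
proof (induction r)
  case Nil then show ?case by (simp add: reduced_def)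
next
  case (Cons x r)
  define X where "X = (if x \<in> carrier A then A else B)"
  have X: "X = A \<or> X = B" and x: "x \<in> carrier X" "x \<notin> H"
    and actx: "act_letter x = act X x" and xA: "\<And>t. t \<in> carrier X - H \<Longrightarrow> t \<in> carrier A \<longleftrightarrow> x \<in> carrier A"
    using Cons.prems inter unfolding X_def reduced_def act_letter_def by auto
  obtain c ts where prev: "act_word r empty_state = (c, ts)" "state (c, ts)"
    "ts = [] \<or> hd ts \<notin> carrier X"
  proof (cases "r = []")
    case True then show ?thesis using that state_empty_state by (simp add: empty_state_def)
  next
    case False
    then obtain c t ts where "act_word r empty_state = (c, t # ts)" "state (c, t # ts)"
      "t \<in> carrier A \<longleftrightarrow> hd r \<in> carrier A"
      using Cons.IH reduced_tl[OF Cons.prems] by blast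
    moreover have "(x \<in> carrier A) \<noteq> (hd r \<in> carrier A)" "t \<in> carrier A \<union> carrier B - H"
      using Cons.prems False calculation(2) unfolding reduced_def state_def rep_seq_def
      by (cases r; auto)+
    ultimately show ?thesis using that X inter unfolding X_def by (auto split: if_splits)
  qed
  obtain c' t where "act X x (c, ts) = (c', t # ts)" "t \<in> carrier X - H"
    using act_grow[OF X x prev(2,3)] by blast
  then show ?case using prev actx act_state[OF X x(1) prev(2)] xA by auto
qed

lemma reduced_not_H:
  assumes "reduced A B H r" "h \<in> H" shows "\<not> rel r [h]"
proof
  assume "rel r [h]"
  then have "act_word r empty_state = (h, [])"
    using rel_act[OF _ state_empty_state] act_word_single_H[OF assms(2)] by simp
  then show False using reduced_act[OF assms(1)] by auto
qed

lemma reduced_not_one: "reduced A B H r \<Longrightarrow> \<not> rel r []"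
  using reduced_not_H[OF _ one_in_H] amal_trans[OF _ amal_sym[OF amal_oneA]] by blast

end

definition normal_word :: "'a monoid \<Rightarrow> 'a monoid \<Rightarrow> 'a set \<Rightarrow> 'a list \<Rightarrow> bool" where
  "normal_word A B H n \<longleftrightarrow> (\<exists>h\<in>H. n = [h]) \<or> reduced A B H n"

context amal
begin

lemma merge_letters:
  assumes x: "x \<in> carrier A \<union> carrier B" and y: "y \<in> carrier A \<union> carrier B" "y \<notin> H"
    and same: "x \<in> H \<or> (x \<in> carrier A \<longleftrightarrow> y \<in> carrier A)"
  obtains z where "z \<in> carrier A \<union> carrier B" "rel [x, y] [z]"
    "z \<notin> H \<Longrightarrow> z \<in> carrier A \<longleftrightarrow> y \<in> carrier A" "x \<in> H \<Longrightarrow> z \<notin> H"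
proof -
  define X where "X = (if y \<in> carrier A then A else B)"
  have X: "X = A \<or> X = B" unfolding X_def by simp
  interpret X: group X using factor(1)[OF X] .
  have yX: "y \<in> carrier X" using y unfolding X_def by auto
  have xX: "x \<in> carrier X"
  proof (cases "x \<in> H")
    case True then show ?thesis using factor(3)[OF X] by blast
  next
    case False then show ?thesis using x same unfolding X_def by auto
  qed
  let ?z = "x \<otimes>\<^bsub>X\<^esub> y"
  have zX: "?z \<in> carrier X" using xX yX by simp
  have "?z \<in> carrier A \<longleftrightarrow> y \<in> carrier A" if "?z \<notin> H"
  proof (cases "y \<in> carrier A")
    case False then show ?thesis using zX that inter unfolding X_def by auto
  qed (use zX in \<open>simp add: X_def\<close>)
  moreover have "?z \<notin> H" if "x \<in> H"
    using X.mult_in_subgroup_iff(1)[OF factor(2)[OF X] that yX] y(2) by simp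
  ultimately show thesis using that[OF _ rel_mult_factor[OF X xX yX]] zX X by blast
qed

lemma absorb_H:
  assumes h: "h \<in> H" and n: "reduced A B H r"
  shows "\<exists>r'. reduced A B H r' \<and> rel (h # r) r'"
proof -
  obtain y r' where r: "r = y # r'" using n unfolding reduced_def by (cases r) auto
  have y: "y \<in> carrier A \<union> carrier B" "y \<notin> H" and r'L: "r' \<in> L"
    using n r unfolding reduced_def by auto
  have hAB: "h \<in> carrier A \<union> carrier B" using h factor(3)[of A] by auto
  obtain z where z: "z \<in> carrier A \<union> carrier B" "rel [h, y] [z]"
    "z \<notin> H \<Longrightarrow> z \<in> carrier A \<longleftrightarrow> y \<in> carrier A" "h \<in> H \<Longrightarrow> z \<notin> H"
    using merge_letters[OF hAB y] h by blast
  have "rel ([] @ [h, y] @ r') ([] @ [z] @ r')" using amal_ctx[OF z(2), of "[]" r'] r'L by simp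
  moreover have "reduced A B H (z # r')"
    using n r z h alternating_replace_hd[of z A y r'] unfolding reduced_def by auto
  ultimately show ?thesis using r by auto
qed

lemma prepend_to_H:
  assumes x: "x \<in> carrier A \<union> carrier B" and h: "h \<in> H" and w: "rel w [h]"
  shows "\<exists>n. normal_word A B H n \<and> rel (x # w) n"
proof -
  define X where "X = (if x \<in> carrier A then A else B)"
  have X: "X = A \<or> X = B" unfolding X_def by simp
  interpret X: group X using factor(1)[OF X] .
  have xX: "x \<in> carrier X" and hX: "h \<in> carrier X"
    using x h factor(3)[OF X] unfolding X_def by auto
  let ?z = "x \<otimes>\<^bsub>X\<^esub> h"
  have r: "rel (x # w) [?z]" using amal_trans[OF rel_cons[OF w x] rel_mult_factor[OF X xX hX]] .
  have "?z \<in> carrier A \<union> carrier B" using X X.m_closed[OF xX hX] by blast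
  then have "normal_word A B H [?z]" unfolding normal_word_def reduced_def by auto
  then show ?thesis using r by blast
qed

lemma prepend_to_reduced:
  assumes x: "x \<in> carrier A \<union> carrier B" and n: "reduced A B H r" and w: "rel w r"
  shows "\<exists>n. normal_word A B H n \<and> rel (x # w) n"
proof -
  obtain y r' where r: "r = y # r'" using n unfolding reduced_def by (cases r) auto
  have y: "y \<in> carrier A \<union> carrier B" "y \<notin> H" and r'L: "r' \<in> L"
    using n r unfolding reduced_def by auto
  have xw: "rel (x # w) (x # r)" using rel_cons[OF w x] .
  have absorb: "\<exists>n. normal_word A B H n \<and> rel (x # w) n"
    if h: "h \<in> H" and s: "reduced A B H s" and hs: "rel (x # w) (h # s)" for h s
  proof -
    obtain s' where "reduced A B H s'" "rel (h # s) s'" using absorb_H[OF h s] by blast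
    then show ?thesis using amal_trans[OF hs] unfolding normal_word_def by blast
  qed
  consider (xH) "x \<in> H" | (alt) "x \<notin> H" "(x \<in> carrier A) \<noteq> (y \<in> carrier A)"
    | (same) "(x \<in> carrier A) = (y \<in> carrier A)" by blast
  then show ?thesis
  proof cases
    case xH
    show ?thesis by (rule absorb[OF xH n xw])
  next
    case alt
    then have "reduced A B H (x # r)" using n r x unfolding reduced_def by auto
    then show ?thesis using xw unfolding normal_word_def by blast
  next
    case same
    obtain z where z: "z \<in> carrier A \<union> carrier B" "rel [x, y] [z]"
      "z \<notin> H \<Longrightarrow> z \<in> carrier A \<longleftrightarrow> y \<in> carrier A"
      using merge_letters[OF x y disjI2[OF same]] by blast
    have "rel ([] @ [x, y] @ r') ([] @ [z] @ r')" using amal_ctx[OF z(2), of "[]" r'] r'L by simp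
    then have xz: "rel (x # w) (z # r')" using amal_trans[OF xw] r by simp
    consider (red) "z \<notin> H" | (single) "z \<in> H" "r' = []" | (tail) "z \<in> H" "r' \<noteq> []" by blast
    then show ?thesis
    proof cases
      case red
      then have "reduced A B H (z # r')"
        using n r z alternating_replace_hd[of z A y r'] unfolding reduced_def by auto
      then show ?thesis using xz unfolding normal_word_def by blast
    next
      case single
      then show ?thesis using xz unfolding normal_word_def by blast
    next
      case tail
      then show ?thesis using absorb[OF _ reduced_tl[OF n[unfolded r]] xz] by blast
    qed
  qed
qed

lemma normal_form_exists: "w \<in> L \<Longrightarrow> \<exists>n. normal_word A B H n \<and> rel w n"
proof (induction w)
  case Nil
  have "rel [] [\<one>\<^bsub>A\<^esub>]" using amal_oneA amal_sym by blast
  then show ?case using one_in_H unfolding normal_word_def by blast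
next
  case (Cons x w)
  then obtain n where n: "normal_word A B H n" "rel w n" by auto
  have x: "x \<in> carrier A \<union> carrier B" using Cons.prems by simp
  from n(1)[unfolded normal_word_def] show ?case
  proof
    assume "\<exists>h\<in>H. n = [h]"
    then show ?thesis using prepend_to_H[OF x] n(2) by blast
  next
    assume "reduced A B H n"
    then show ?thesis using prepend_to_reduced[OF x _ n(2)] by blast
  qed
qed

lemma status_normal_word:
  assumes n: "normal_word A B H n" and r: "rel w n"
  shows "rel w [] \<longleftrightarrow> n = [\<one>\<^bsub>A\<^esub>]"
    and "(\<exists>c\<in>carrier C. rel w [e c]) \<longleftrightarrow> (\<exists>h\<in>H. n = [h])"
proof -
  have rw: "rel w v \<longleftrightarrow> rel n v" for v
    using amal_trans[OF amal_sym[OF r]] amal_trans[OF r] by blast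
  have "(rel w [] \<longleftrightarrow> n = [\<one>\<^bsub>A\<^esub>]) \<and> ((\<exists>c\<in>carrier C. rel w [e c]) \<longleftrightarrow> (\<exists>h\<in>H. n = [h]))"
    using n unfolding normal_word_def
  proof
    assume "\<exists>h\<in>H. n = [h]"
    then obtain c where c: "c \<in> carrier C" and nc: "n = [e c]" by blast
    have "rel [e c] [] \<longleftrightarrow> e c = \<one>\<^bsub>A\<^esub>" using rel_H_one[of "e c"] c amal_oneA by auto
    then show ?thesis using rw[of "[]"] r c nc by auto
  next
    assume red: "reduced A B H n"
    have "n \<noteq> [h]" if "h \<in> H" for h using that red unfolding reduced_def by auto
    moreover have "\<not> rel w [e c]" if "c \<in> carrier C" for c
      using rw[of "[e c]"] reduced_not_H[OF red, of "e c"] that by simp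
    ultimately show ?thesis using rw[of "[]"] reduced_not_one[OF red] one_in_H by auto
  qed
  then show "rel w [] \<longleftrightarrow> n = [\<one>\<^bsub>A\<^esub>]"
    and "(\<exists>c\<in>carrier C. rel w [e c]) \<longleftrightarrow> (\<exists>h\<in>H. n = [h])" by blast+
qed

end


section \<open>Transfer of derivations along partial maps of multiplication tables\<close>

definition partial_table_hom ::
  "'a monoid \<Rightarrow> 'a monoid \<Rightarrow> 'b monoid \<Rightarrow> 'b monoid \<Rightarrow> 'a set \<Rightarrow> ('a \<Rightarrow> 'b) \<Rightarrow> bool" where
  "partial_table_hom A1 B1 A2 B2 F f \<longleftrightarrow>
    (\<forall>x\<in>F. (x \<in> carrier A1 \<longrightarrow> f x \<in> carrier A2) \<and> (x \<in> carrier B1 \<longrightarrow> f x \<in> carrier B2))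
  \<and> (\<forall>x\<in>F. \<forall>y\<in>F. x \<in> carrier A1 \<longrightarrow> y \<in> carrier A1 \<longrightarrow> x \<otimes>\<^bsub>A1\<^esub> y \<in> F \<longrightarrow>
        f (x \<otimes>\<^bsub>A1\<^esub> y) = f x \<otimes>\<^bsub>A2\<^esub> f y)
  \<and> (\<forall>x\<in>F. \<forall>y\<in>F. x \<in> carrier B1 \<longrightarrow> y \<in> carrier B1 \<longrightarrow> x \<otimes>\<^bsub>B1\<^esub> y \<in> F \<longrightarrow>
        f (x \<otimes>\<^bsub>B1\<^esub> y) = f x \<otimes>\<^bsub>B2\<^esub> f y)
  \<and> (\<one>\<^bsub>A1\<^esub> \<in> F \<longrightarrow> f \<one>\<^bsub>A1\<^esub> = \<one>\<^bsub>A2\<^esub>) \<and> (\<one>\<^bsub>B1\<^esub> \<in> F \<longrightarrow> f \<one>\<^bsub>B1\<^esub> = \<one>\<^bsub>B2\<^esub>)"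

lemma partial_table_hom_mono:
  "partial_table_hom A1 B1 A2 B2 F' f \<Longrightarrow> F \<subseteq> F' \<Longrightarrow> partial_table_hom A1 B1 A2 B2 F f"
  unfolding partial_table_hom_def by (meson subsetD)

lemma partial_table_hom_lists:
  assumes "partial_table_hom A1 B1 A2 B2 F f" and "set w \<subseteq> F" and "F \<subseteq> carrier A1 \<union> carrier B1"
  shows "map f w \<in> lists (carrier A2 \<union> carrier B2)"
  using assms unfolding partial_table_hom_def by (auto simp: in_lists_conv_set)

definition transports ::
  "'a monoid \<Rightarrow> 'a monoid \<Rightarrow> 'b monoid \<Rightarrow> 'b monoid \<Rightarrow> 'a set \<Rightarrow> 'a list \<Rightarrow> 'a list \<Rightarrow> bool" where
  "transports A1 B1 A2 B2 F u v \<longleftrightarrow>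
     (\<forall>f. partial_table_hom A1 B1 A2 B2 F f \<longrightarrow> amal_rel A2 B2 (map f u) (map f v))"

definition certified :: "'a monoid \<Rightarrow> 'a monoid \<Rightarrow> 'b monoid \<Rightarrow> 'b monoid \<Rightarrow> 'a list \<Rightarrow> 'a list \<Rightarrow> bool" where
  "certified A1 B1 A2 B2 u v \<longleftrightarrow> (\<exists>F. finite F \<and> F \<subseteq> carrier A1 \<union> carrier B1 \<and> set u \<union> set v \<subseteq> F
     \<and> transports A1 B1 A2 B2 F u v)"

lemma transports_mono: "transports A1 B1 A2 B2 F u v \<Longrightarrow> F \<subseteq> F' \<Longrightarrow> transports A1 B1 A2 B2 F' u v"
  unfolding transports_def using partial_table_hom_mono by blast

lemma certified_by_own_letters:
  assumes "set u \<union> set v \<subseteq> carrier A1 \<union> carrier B1"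
    and "\<And>f. partial_table_hom A1 B1 A2 B2 (set u \<union> set v) f \<Longrightarrow> amal_rel A2 B2 (map f u) (map f v)"
  shows "certified A1 B1 A2 B2 u v"
  using assms unfolding certified_def transports_def by blast

lemma certified_sym: "certified A1 B1 A2 B2 u v \<Longrightarrow> certified A1 B1 A2 B2 v u"
  unfolding certified_def transports_def using amal_sym[of A2 B2] by (metis sup_commute)

lemma certified_trans:
  assumes "certified A1 B1 A2 B2 u v" "certified A1 B1 A2 B2 v w"
  shows "certified A1 B1 A2 B2 u w"
proof -
  obtain F1 F2 where F: "finite F1" "F1 \<subseteq> carrier A1 \<union> carrier B1" "set u \<union> set v \<subseteq> F1"
    "transports A1 B1 A2 B2 F1 u v" "finite F2" "F2 \<subseteq> carrier A1 \<union> carrier B1" "set v \<union> set w \<subseteq> F2"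
    "transports A1 B1 A2 B2 F2 v w"
    using assms unfolding certified_def by blast
  have "transports A1 B1 A2 B2 (F1 \<union> F2) u v" "transports A1 B1 A2 B2 (F1 \<union> F2) v w"
    using transports_mono F(4,8) by blast+
  then have "transports A1 B1 A2 B2 (F1 \<union> F2) u w"
    unfolding transports_def using amal_trans by blast
  then show ?thesis using F unfolding certified_def by (intro exI[of _ "F1 \<union> F2"]) auto
qed

lemma certified_ctx:
  assumes "certified A1 B1 A2 B2 u v"
    and "xs \<in> lists (carrier A1 \<union> carrier B1)" "ys \<in> lists (carrier A1 \<union> carrier B1)"
  shows "certified A1 B1 A2 B2 (xs @ u @ ys) (xs @ v @ ys)"
proof -
  obtain F where F: "finite F" "F \<subseteq> carrier A1 \<union> carrier B1" "set u \<union> set v \<subseteq> F"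
    "transports A1 B1 A2 B2 F u v"
    using assms(1) unfolding certified_def by blast
  let ?F = "F \<union> set xs \<union> set ys"
  have sub: "set xs \<union> set ys \<subseteq> carrier A1 \<union> carrier B1"
    using assms(2,3) by (auto simp: in_lists_conv_set)
  have "amal_rel A2 B2 (map f (xs @ u @ ys)) (map f (xs @ v @ ys))"
    if f: "partial_table_hom A1 B1 A2 B2 ?F f" for f
  proof -
    have "amal_rel A2 B2 (map f u) (map f v)"
      using transports_mono[OF F(4), of ?F] f unfolding transports_def by blast
    moreover have "map f xs \<in> lists (carrier A2 \<union> carrier B2)" "map f ys \<in> lists (carrier A2 \<union> carrier B2)"
      using partial_table_hom_lists[OF f] F(2) sub by auto
    ultimately show ?thesis using amal_ctx by simp
  qed
  then show ?thesis using F sub unfolding certified_def transports_def by (intro exI[of _ ?F]) auto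
qed

lemma rel_certified:
  assumes gA: "group A1" and gB: "group B1"
  shows "amal_rel A1 B1 u v \<Longrightarrow> certified A1 B1 A2 B2 u v"
proof (induction rule: amal_rel.induct)
  case (amal_refl w)
  have "set w \<subseteq> carrier A1 \<union> carrier B1" using amal_refl by (auto simp: in_lists_conv_set)
  then show ?case
  proof (intro certified_by_own_letters)
    fix f assume "partial_table_hom A1 B1 A2 B2 (set w \<union> set w) f"
    then have "map f w \<in> lists (carrier A2 \<union> carrier B2)"
      using partial_table_hom_lists \<open>set w \<subseteq> carrier A1 \<union> carrier B1\<close> by (metis Un_absorb order_refl)
    then show "amal_rel A2 B2 (map f w) (map f w)" by (rule amal_rel.amal_refl)
  qed simp
next
  case (amal_multA a b)
  have ab: "a \<otimes>\<^bsub>A1\<^esub> b \<in> carrier A1" using monoid.m_closed[OF group.is_monoid[OF gA] amal_multA] .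
  show ?case
  proof (rule certified_by_own_letters)
    show "set [a, b] \<union> set [a \<otimes>\<^bsub>A1\<^esub> b] \<subseteq> carrier A1 \<union> carrier B1" using amal_multA ab by auto
  next
    fix f assume "partial_table_hom A1 B1 A2 B2 (set [a, b] \<union> set [a \<otimes>\<^bsub>A1\<^esub> b]) f"
    then have "f a \<in> carrier A2" "f b \<in> carrier A2" "f (a \<otimes>\<^bsub>A1\<^esub> b) = f a \<otimes>\<^bsub>A2\<^esub> f b"
      using amal_multA unfolding partial_table_hom_def by auto
    then show "amal_rel A2 B2 (map f [a, b]) (map f [a \<otimes>\<^bsub>A1\<^esub> b])" by (simp add: amal_rel.amal_multA)
  qed
next
  case (amal_multB a b)
  have ab: "a \<otimes>\<^bsub>B1\<^esub> b \<in> carrier B1" using monoid.m_closed[OF group.is_monoid[OF gB] amal_multB] .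
  show ?case
  proof (rule certified_by_own_letters)
    show "set [a, b] \<union> set [a \<otimes>\<^bsub>B1\<^esub> b] \<subseteq> carrier A1 \<union> carrier B1" using amal_multB ab by auto
  next
    fix f assume "partial_table_hom A1 B1 A2 B2 (set [a, b] \<union> set [a \<otimes>\<^bsub>B1\<^esub> b]) f"
    then have "f a \<in> carrier B2" "f b \<in> carrier B2" "f (a \<otimes>\<^bsub>B1\<^esub> b) = f a \<otimes>\<^bsub>B2\<^esub> f b"
      using amal_multB unfolding partial_table_hom_def by auto
    then show "amal_rel A2 B2 (map f [a, b]) (map f [a \<otimes>\<^bsub>B1\<^esub> b])" by (simp add: amal_rel.amal_multB)
  qed
next
  case amal_oneA
  show ?case
  proof (rule certified_by_own_letters)
    show "set [\<one>\<^bsub>A1\<^esub>] \<union> set [] \<subseteq> carrier A1 \<union> carrier B1"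
      using monoid.one_closed[OF group.is_monoid[OF gA]] by auto
  next
    fix f assume "partial_table_hom A1 B1 A2 B2 (set [\<one>\<^bsub>A1\<^esub>] \<union> set []) f"
    then have "f \<one>\<^bsub>A1\<^esub> = \<one>\<^bsub>A2\<^esub>" unfolding partial_table_hom_def by auto
    then show "amal_rel A2 B2 (map f [\<one>\<^bsub>A1\<^esub>]) (map f [])" by (simp add: amal_rel.amal_oneA)
  qed
next
  case amal_oneB
  show ?case
  proof (rule certified_by_own_letters)
    show "set [\<one>\<^bsub>B1\<^esub>] \<union> set [] \<subseteq> carrier A1 \<union> carrier B1"
      using monoid.one_closed[OF group.is_monoid[OF gB]] by auto
  next
    fix f assume "partial_table_hom A1 B1 A2 B2 (set [\<one>\<^bsub>B1\<^esub>] \<union> set []) f"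
    then have "f \<one>\<^bsub>B1\<^esub> = \<one>\<^bsub>B2\<^esub>" unfolding partial_table_hom_def by auto
    then show "amal_rel A2 B2 (map f [\<one>\<^bsub>B1\<^esub>]) (map f [])" by (simp add: amal_rel.amal_oneB)
  qed
next
  case (amal_sym u v) show ?case using amal_sym.IH by (rule certified_sym)
next
  case (amal_trans u v w) show ?case using amal_trans.IH by (rule certified_trans)
next
  case (amal_ctx u v xs ys) show ?case using amal_ctx.IH amal_ctx.hyps(2,3) by (rule certified_ctx)
qed

lemma map_word_inv:
  "(\<forall>x\<in>set v. f (letter_inv A1 B1 x) = letter_inv A2 B2 (f x)) \<Longrightarrow>
    map f (word_inv A1 B1 v) = word_inv A2 B2 (map f v)"
  unfolding word_inv_def by (induction v) auto


section \<open>Gluing partial L_C-isomorphisms of the factors\<close>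

definition glue :: "'a monoid \<Rightarrow> ('a \<Rightarrow> 'b) \<Rightarrow> ('a \<Rightarrow> 'b) \<Rightarrow> 'a \<Rightarrow> 'b" where
  "glue A fa fb x = (if x \<in> carrier A then fa x else fb x)"

text \<open>Given a finite set F of letters of A1 *_C B1 and L_C-isomorphisms of F \<inter> A1 and F \<inter> B1
  into A2 and B2, the glued letter map agrees with both (they agree on the copy of C, which
  they fix), and it respects factors, membership in C, inverses and multiplication tables.\<close>

locale glued_isos = s1: amal C A1 B1 e1 + s2: amal C A2 B2 e2
  for C :: "'c monoid" and A1 B1 :: "'a monoid" and e1 :: "'c \<Rightarrow> 'a"
    and A2 B2 :: "'b monoid" and e2 :: "'c \<Rightarrow> 'b" +
  fixes F :: "'a set" and TA TB :: "'b set" and fa fb :: "'a \<Rightarrow> 'b"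
  assumes F: "F \<subseteq> carrier A1 \<union> carrier B1"
    and iso_A: "lc_iso C A1 e1 A2 e2 (F \<inter> carrier A1) TA fa" and TA: "TA \<subseteq> carrier A2"
    and iso_B: "lc_iso C B1 e1 B2 e2 (F \<inter> carrier B1) TB fb" and TB: "TB \<subseteq> carrier B2"
begin

abbreviation "f \<equiv> glue A1 fa fb"

lemma bij_A: "bij_betw fa (F \<inter> carrier A1) TA"
  and pres_A: "lc_pres C A1 e1 A2 e2 (F \<inter> carrier A1) fa"
  and pres_inv_A: "lc_pres C A2 e2 A1 e1 TA (inv_into (F \<inter> carrier A1) fa)"
  and bij_B: "bij_betw fb (F \<inter> carrier B1) TB"
  and pres_B: "lc_pres C B1 e1 B2 e2 (F \<inter> carrier B1) fb"
  and pres_inv_B: "lc_pres C B2 e2 B1 e1 TB (inv_into (F \<inter> carrier B1) fb)"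
  using iso_A iso_B unfolding lc_iso_def by auto

lemma glue_A: "x \<in> carrier A1 \<Longrightarrow> f x = fa x"
  by (simp add: glue_def)

lemma fa_const: "c \<in> carrier C \<Longrightarrow> e1 c \<in> F \<Longrightarrow> fa (e1 c) = e2 c"
  using conjunct1[OF pres_A[unfolded lc_pres_def]] s1.H_carrier_A by blast

lemma fb_const: "c \<in> carrier C \<Longrightarrow> e1 c \<in> F \<Longrightarrow> fb (e1 c) = e2 c"
  using conjunct1[OF pres_B[unfolded lc_pres_def]] s1.H_carrier_B by blast

lemma fa_mult: "x \<in> F \<inter> carrier A1 \<Longrightarrow> y \<in> F \<inter> carrier A1 \<Longrightarrow> x \<otimes>\<^bsub>A1\<^esub> y \<in> F \<inter> carrier A1
    \<Longrightarrow> fa (x \<otimes>\<^bsub>A1\<^esub> y) = fa x \<otimes>\<^bsub>A2\<^esub> fa y"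
  using pres_A unfolding lc_pres_def by blast

lemma fb_mult: "x \<in> F \<inter> carrier B1 \<Longrightarrow> y \<in> F \<inter> carrier B1 \<Longrightarrow> x \<otimes>\<^bsub>B1\<^esub> y \<in> F \<inter> carrier B1
    \<Longrightarrow> fb (x \<otimes>\<^bsub>B1\<^esub> y) = fb x \<otimes>\<^bsub>B2\<^esub> fb y"
  using pres_B unfolding lc_pres_def by blast

lemma fa_inv: "x \<in> F \<inter> carrier A1 \<Longrightarrow> inv\<^bsub>A1\<^esub> x \<in> F \<inter> carrier A1 \<Longrightarrow> fa (inv\<^bsub>A1\<^esub> x) = inv\<^bsub>A2\<^esub> (fa x)"
  using pres_A unfolding lc_pres_def by blast

lemma fb_inv: "x \<in> F \<inter> carrier B1 \<Longrightarrow> inv\<^bsub>B1\<^esub> x \<in> F \<inter> carrier B1 \<Longrightarrow> fb (inv\<^bsub>B1\<^esub> x) = inv\<^bsub>B2\<^esub> (fb x)"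
  using pres_B unfolding lc_pres_def by blast

lemma glue_const:
  assumes "c \<in> carrier C" "e1 c \<in> F" shows "f (e1 c) = e2 c"
proof -
  have "e1 c \<in> carrier A1" using s1.H_carrier_A assms(1) by blast
  then show ?thesis using fa_const[OF assms] glue_A by simp
qed

text \<open>On letters of B1 the glued map is fb: the only letters of B1 in A1 are constants,
  which both maps fix.\<close>
lemma glue_B:
  assumes x: "x \<in> F" "x \<in> carrier B1" shows "f x = fb x"
proof (cases "x \<in> carrier A1")
  case True
  then obtain c where c: "c \<in> carrier C" "x = e1 c" using x s1.inter by blast
  then show ?thesis using glue_const fb_const x by simp
qed (simp add: glue_def)

lemma glue_carrier_A: "x \<in> F \<Longrightarrow> x \<in> carrier A1 \<Longrightarrow> f x \<in> carrier A2"
  using bij_betw_apply[OF bij_A, of x] TA glue_A by auto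

lemma glue_carrier_B: "x \<in> F \<Longrightarrow> x \<in> carrier B1 \<Longrightarrow> f x \<in> carrier B2"
  using bij_betw_apply[OF bij_B, of x] TB glue_B by auto

lemma glue_H_iff:
  assumes x: "x \<in> F" shows "x \<in> e1 ` carrier C \<longleftrightarrow> f x \<in> e2 ` carrier C"
proof
  assume "x \<in> e1 ` carrier C"
  then show "f x \<in> e2 ` carrier C" using glue_const x by auto
next
  assume fx: "f x \<in> e2 ` carrier C"
  show "x \<in> e1 ` carrier C"
  proof (cases "x \<in> carrier A1")
    case True
    then have xS: "x \<in> F \<inter> carrier A1" using x by blast
    then have "inv_into (F \<inter> carrier A1) fa (fa x) \<in> e1 ` carrier C"
      using pres_inv_A bij_betw_apply[OF bij_A xS] fx glue_A[OF True] unfolding lc_pres_def by auto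
    then show ?thesis using bij_betw_inv_into_left[OF bij_A xS] by simp
  next
    case False
    then have xS: "x \<in> F \<inter> carrier B1" using x F by blast
    then have "inv_into (F \<inter> carrier B1) fb (fb x) \<in> e1 ` carrier C"
      using pres_inv_B bij_betw_apply[OF bij_B xS] fx glue_B x unfolding lc_pres_def by auto
    then show ?thesis using bij_betw_inv_into_left[OF bij_B xS] by simp
  qed
qed

lemma glue_factor_iff:
  assumes x: "x \<in> F" "x \<notin> e1 ` carrier C" shows "x \<in> carrier A1 \<longleftrightarrow> f x \<in> carrier A2"
proof
  assume "x \<in> carrier A1" then show "f x \<in> carrier A2" using glue_carrier_A x by blast
next
  assume fx: "f x \<in> carrier A2"
  show "x \<in> carrier A1"
  proof (rule ccontr)
    assume "x \<notin> carrier A1"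
    then have "f x \<in> carrier B2" using glue_carrier_B x F by blast
    then have "f x \<in> e2 ` carrier C" using fx s2.inter by blast
    then show False using glue_H_iff x by blast
  qed
qed

lemma glue_letter_inv:
  assumes x: "x \<in> F" and lx: "letter_inv A1 B1 x \<in> F"
  shows "f (letter_inv A1 B1 x) = letter_inv A2 B2 (f x)"
proof (cases "x \<in> carrier A1")
  case True
  interpret A1: group A1 by (rule s1.group_A)
  have li: "letter_inv A1 B1 x = inv\<^bsub>A1\<^esub> x" using True by (simp add: letter_inv_def)
  have "fa (inv\<^bsub>A1\<^esub> x) = inv\<^bsub>A2\<^esub> (fa x)" using fa_inv x True lx li by simp
  then show ?thesis using li glue_A True glue_carrier_A[OF x True] by (simp add: letter_inv_def)
next
  case False
  interpret B1: group B1 by (rule s1.group_B)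
  have xB: "x \<in> carrier B1" and xH: "x \<notin> e1 ` carrier C" using False x F s1.inter by auto
  have li: "letter_inv A1 B1 x = inv\<^bsub>B1\<^esub> x" using False by (simp add: letter_inv_def)
  have "inv\<^bsub>B1\<^esub> x \<notin> e1 ` carrier C"
    using subgroup.m_inv_closed[OF s1.H_subgroup_B, of "inv\<^bsub>B1\<^esub> x"] xB xH by auto
  then have "inv\<^bsub>B1\<^esub> x \<notin> carrier A1" using xB s1.inter by blast
  moreover have "fb (inv\<^bsub>B1\<^esub> x) = inv\<^bsub>B2\<^esub> (fb x)" using fb_inv x xB lx li by simp
  moreover have "f x \<notin> carrier A2" using glue_factor_iff[OF x xH] False by simp
  ultimately show ?thesis using li glue_B[OF x xB] glue_B[OF lx] xB by (simp add: letter_inv_def)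
qed

lemma glue_table_hom: "partial_table_hom A1 B1 A2 B2 F f"
proof -
  have "\<one>\<^bsub>C\<^esub> \<in> carrier C" using group.is_monoid[OF s1.group_C] monoid.one_closed by blast
  then have "\<one>\<^bsub>A1\<^esub> \<in> F \<longrightarrow> f \<one>\<^bsub>A1\<^esub> = \<one>\<^bsub>A2\<^esub>" "\<one>\<^bsub>B1\<^esub> \<in> F \<longrightarrow> f \<one>\<^bsub>B1\<^esub> = \<one>\<^bsub>B2\<^esub>"
    using glue_const s1.one_A s2.one_A s1.one_B s2.one_B by auto
  moreover have "f (x \<otimes>\<^bsub>A1\<^esub> y) = f x \<otimes>\<^bsub>A2\<^esub> f y"
    if "x \<in> F" "y \<in> F" "x \<in> carrier A1" "y \<in> carrier A1" "x \<otimes>\<^bsub>A1\<^esub> y \<in> F" for x y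
    using that fa_mult glue_A monoid.m_closed[OF group.is_monoid[OF s1.group_A] that(3,4)] by simp
  moreover have "f (x \<otimes>\<^bsub>B1\<^esub> y) = f x \<otimes>\<^bsub>B2\<^esub> f y"
    if "x \<in> F" "y \<in> F" "x \<in> carrier B1" "y \<in> carrier B1" "x \<otimes>\<^bsub>B1\<^esub> y \<in> F" for x y
    using that fb_mult glue_B monoid.m_closed[OF group.is_monoid[OF s1.group_B] that(3,4)] by simp
  ultimately show ?thesis
    using glue_carrier_A glue_carrier_B unfolding partial_table_hom_def by blast
qed

end


section \<open>Existential formulas as conditions on words\<close>

fun subterms :: "'c lterm \<Rightarrow> 'c lterm list" where
  "subterms (LVar i) = [LVar i]"
| "subterms (LConst c) = [LConst c]"
| "subterms (LMul s t) = LMul s t # subterms s @ subterms t"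
| "subterms (LInv t) = LInv t # subterms t"

fun form_terms :: "'c lform \<Rightarrow> 'c lterm list" where
  "form_terms (LEq s t) = subterms s @ subterms t"
| "form_terms (LDelta t) = subterms t"
| "form_terms (LNot f) = form_terms f"
| "form_terms (LAnd f g) = form_terms f @ form_terms g"
| "form_terms (LOr f g) = form_terms f @ form_terms g"

lemma subterms_self: "t \<in> set (subterms t)"
  by (cases t) auto

lemma subterms_trans: "u \<in> set (subterms t) \<Longrightarrow> set (subterms u) \<subseteq> set (subterms t)"
  by (induction t) auto

lemma subterms_consts: "u \<in> set (subterms t) \<Longrightarrow> lterm_consts u \<subseteq> lterm_consts t"
  by (induction t) auto

lemma form_terms_closed: "u \<in> set (form_terms \<phi>) \<Longrightarrow> set (subterms u) \<subseteq> set (form_terms \<phi>)"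
proof (induction \<phi>)
  case (LEq s t) then show ?case using subterms_trans[of u s] subterms_trans[of u t] by auto
next
  case (LDelta t) then show ?case using subterms_trans[of u t] by auto
qed auto

lemma form_terms_consts: "u \<in> set (form_terms \<phi>) \<Longrightarrow> lterm_consts u \<subseteq> lform_consts \<phi>"
proof (induction \<phi>)
  case (LEq s t) then show ?case using subterms_consts[of u s] subterms_consts[of u t] by auto
next
  case (LDelta t) then show ?case using subterms_consts[of u t] by auto
qed auto

fun term_word :: "'a monoid \<Rightarrow> 'a monoid \<Rightarrow> ('c \<Rightarrow> 'a) \<Rightarrow> (nat \<Rightarrow> 'a list) \<Rightarrow> 'c lterm \<Rightarrow> 'a list" where
  "term_word A B e ws (LVar i) = ws i"
| "term_word A B e ws (LConst c) = [e c]"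
| "term_word A B e ws (LMul s t) = term_word A B e ws s @ term_word A B e ws t"
| "term_word A B e ws (LInv t) = word_inv A B (term_word A B e ws t)"

fun word_sat :: "'c monoid \<Rightarrow> 'a monoid \<Rightarrow> 'a monoid \<Rightarrow> ('c \<Rightarrow> 'a) \<Rightarrow> (nat \<Rightarrow> 'a list) \<Rightarrow> 'c lform \<Rightarrow> bool" where
  "word_sat C A B e ws (LEq s t) = amal_rel A B (term_word A B e ws s) (term_word A B e ws t)"
| "word_sat C A B e ws (LDelta t) = (\<exists>c\<in>carrier C. amal_rel A B (term_word A B e ws t) [e c])"
| "word_sat C A B e ws (LNot f) = (\<not> word_sat C A B e ws f)"
| "word_sat C A B e ws (LAnd f g) = (word_sat C A B e ws f \<and> word_sat C A B e ws g)"
| "word_sat C A B e ws (LOr f g) = (word_sat C A B e ws f \<or> word_sat C A B e ws g)"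

text \<open>The finitely many words whose status decides the truth of a formula: the values of its
  terms and, for each equation s = t, the quotient word of s and t.\<close>

definition formula_words ::
  "'a monoid \<Rightarrow> 'a monoid \<Rightarrow> ('c \<Rightarrow> 'a) \<Rightarrow> (nat \<Rightarrow> 'a list) \<Rightarrow> 'c lform \<Rightarrow> 'a list set" where
  "formula_words A B e ws \<phi> = term_word A B e ws ` set (form_terms \<phi>)
     \<union> (\<lambda>(s, t). term_word A B e ws s @ word_inv A B (term_word A B e ws t))
         ` (set (form_terms \<phi>) \<times> set (form_terms \<phi>))"

lemma finite_formula_words: "finite (formula_words A B e ws \<phi>)"
  unfolding formula_words_def by simp

context amal
begin

lemma term_word_class:
  assumes ws: "\<forall>i. ws i \<in> L"
  shows "lterm_consts t \<subseteq> carrier C \<Longrightarrow>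
    teval (amal_prod A B) (amal_emb A B e) (\<lambda>i. word_class A B (ws i)) t = word_class A B (term_word A B e ws t)
    \<and> term_word A B e ws t \<in> L"
proof (induction t)
  case (LVar i) then show ?case using ws by simp
next
  case (LConst c)
  then show ?case using emb_amal H_carrier_A by auto
next
  case (LMul s t) then show ?case using mult_amal by simp
next
  case (LInv t) then show ?case using inv_amal word_inv_lists by simp
qed

lemma formula_words_lists:
  assumes ws: "\<forall>i. ws i \<in> L" and lc: "lform_consts \<phi> \<subseteq> carrier C"
  shows "formula_words A B e ws \<phi> \<subseteq> L"
proof -
  have T: "term_word A B e ws u \<in> L" if "u \<in> set (form_terms \<phi>)" for u
    using term_word_class[OF ws] form_terms_consts[OF that] lc by blast
  show ?thesis unfolding formula_words_def
  proof (intro Un_least image_subsetI)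
    fix p assume "p \<in> set (form_terms \<phi>) \<times> set (form_terms \<phi>)"
    then obtain s t where "p = (s, t)" "s \<in> set (form_terms \<phi>)" "t \<in> set (form_terms \<phi>)" by blast
    then show "(\<lambda>(s, t). term_word A B e ws s @ word_inv A B (term_word A B e ws t)) p \<in> L"
      using T word_inv_lists[OF T] by simp
  qed (rule T)
qed

lemma fsat_word_sat:
  assumes ws: "\<forall>i. ws i \<in> L"
  shows "lform_consts \<phi> \<subseteq> carrier C \<Longrightarrow>
    fsat (amal_prod A B) (amal_emb A B e) (amal_emb A B e ` carrier C) (\<lambda>i. word_class A B (ws i)) \<phi>
      \<longleftrightarrow> word_sat C A B e ws \<phi>"
proof (induction \<phi>)
  case (LEq s t)
  then show ?case using term_word_class[OF ws, of s] term_word_class[OF ws, of t] word_class_eq by simp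
next
  case (LDelta t)
  then have tw: "teval (amal_prod A B) (amal_emb A B e) (\<lambda>i. word_class A B (ws i)) t
      = word_class A B (term_word A B e ws t)" "term_word A B e ws t \<in> L"
    using term_word_class[OF ws] by auto
  have "word_class A B (term_word A B e ws t) \<in> amal_emb A B e ` carrier C
      \<longleftrightarrow> (\<exists>c\<in>carrier C. rel (term_word A B e ws t) [e c])"
    unfolding image_iff emb_amal word_class_eq[OF tw(2)] ..
  then show ?case using tw(1) by simp
qed auto

lemma ex_holds_iff_words:
  assumes lc: "lform_consts \<phi> \<subseteq> carrier C"
  shows "ex_holds C (amal_prod A B) (amal_emb A B e) \<phi> \<longleftrightarrow> (\<exists>ws. (\<forall>i. ws i \<in> L) \<and> word_sat C A B e ws \<phi>)"
proof
  assume "ex_holds C (amal_prod A B) (amal_emb A B e) \<phi>"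
  then obtain \<sigma> where \<sigma>: "\<forall>i. \<sigma> i \<in> carrier (amal_prod A B)"
    "fsat (amal_prod A B) (amal_emb A B e) (amal_emb A B e ` carrier C) \<sigma> \<phi>"
    unfolding ex_holds_def by blast
  have "\<forall>i. \<exists>w. w \<in> L \<and> \<sigma> i = word_class A B w" using \<sigma>(1) unfolding carrier_amal by blast
  then have "\<exists>ws. \<forall>i. ws i \<in> L \<and> \<sigma> i = word_class A B (ws i)" by (rule choice)
  then obtain ws where "\<forall>i. ws i \<in> L \<and> \<sigma> i = word_class A B (ws i)" by blast
  then have ws: "\<forall>i. ws i \<in> L" and "\<sigma> = (\<lambda>i. word_class A B (ws i))" by (auto simp: fun_eq_iff)
  then show "\<exists>ws. (\<forall>i. ws i \<in> L) \<and> word_sat C A B e ws \<phi>" using \<sigma>(2) fsat_word_sat[OF ws lc] by blast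
next
  assume "\<exists>ws. (\<forall>i. ws i \<in> L) \<and> word_sat C A B e ws \<phi>"
  then obtain ws where ws: "\<forall>i. ws i \<in> L" "word_sat C A B e ws \<phi>" by blast
  then show "ex_holds C (amal_prod A B) (amal_emb A B e) \<phi>"
    using fsat_word_sat[OF ws(1) lc] carrier_amal unfolding ex_holds_def
    by (intro exI[of _ "\<lambda>i. word_class A B (ws i)"]) auto
qed

lemma finite_certificate:
  fixes A2 B2 :: "'b monoid"
  assumes "finite W" "W \<subseteq> L"
  shows "\<exists>F. finite F \<and> F \<subseteq> carrier A \<union> carrier B \<and> (\<forall>w\<in>W. set w \<subseteq> F
     \<and> (\<exists>n. normal_word A B H n \<and> rel w n \<and> set n \<subseteq> F \<and> transports A B A2 B2 F w n))"
  using assms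
proof (induction W rule: finite_induct)
  case empty
  show ?case by (intro exI[of _ "{}"]) simp
next
  case (insert w W)
  then have "W \<subseteq> L" "w \<in> L" by simp_all
  then obtain F where F: "finite F" "F \<subseteq> carrier A \<union> carrier B" "\<forall>w\<in>W. set w \<subseteq> F
     \<and> (\<exists>n. normal_word A B H n \<and> rel w n \<and> set n \<subseteq> F \<and> transports A B A2 B2 F w n)"
    using insert.IH by blast
  obtain n where n: "normal_word A B H n" "rel w n" using normal_form_exists \<open>w \<in> L\<close> by blast
  have "certified A B A2 B2 w n" using group_A group_B n(2) by (rule rel_certified)
  then obtain Fw where Fw: "finite Fw" "Fw \<subseteq> carrier A \<union> carrier B" "set w \<union> set n \<subseteq> Fw"
    "transports A B A2 B2 Fw w n"
    unfolding certified_def by blast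
  have "\<forall>v\<in>insert w W. set v \<subseteq> F \<union> Fw
     \<and> (\<exists>n. normal_word A B H n \<and> rel v n \<and> set n \<subseteq> F \<union> Fw \<and> transports A B A2 B2 (F \<union> Fw) v n)"
  proof
    fix v assume "v \<in> insert w W"
    then show "set v \<subseteq> F \<union> Fw
      \<and> (\<exists>n. normal_word A B H n \<and> rel v n \<and> set n \<subseteq> F \<union> Fw \<and> transports A B A2 B2 (F \<union> Fw) v n)"
    proof
      assume "v = w"
      then show ?thesis using Fw n transports_mono[OF Fw(4), of "F \<union> Fw"] by blast
    next
      assume "v \<in> W"
      then obtain m where "set v \<subseteq> F" "normal_word A B H m" "rel v m" "set m \<subseteq> F"
        "transports A B A2 B2 F v m" using F(3) by blast
      then show ?thesis using transports_mono[of A B A2 B2 F v m "F \<union> Fw"] by blast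
    qed
  qed
  then show ?case using F Fw by (intro exI[of _ "F \<union> Fw"]) auto
qed

end

lemma alternating_map:
  "alternating A1 n \<Longrightarrow> \<forall>x\<in>set n. (f x \<in> carrier A2) = (x \<in> carrier A1) \<Longrightarrow> alternating A2 (map f n)"
  by (induction A1 n rule: alternating.induct) auto

context glued_isos
begin

lemma glue_normal_word:
  assumes n: "normal_word A1 B1 s1.H n" and nF: "set n \<subseteq> F"
  shows "normal_word A2 B2 s2.H (map f n)" and "map f n = [\<one>\<^bsub>A2\<^esub>] \<longleftrightarrow> n = [\<one>\<^bsub>A1\<^esub>]"
    and "(\<exists>h\<in>s2.H. map f n = [h]) \<longleftrightarrow> (\<exists>h\<in>s1.H. n = [h])"
proof -
  have "normal_word A2 B2 s2.H (map f n) \<and> (map f n = [\<one>\<^bsub>A2\<^esub>] \<longleftrightarrow> n = [\<one>\<^bsub>A1\<^esub>])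
    \<and> ((\<exists>h\<in>s2.H. map f n = [h]) \<longleftrightarrow> (\<exists>h\<in>s1.H. n = [h]))"
    using n[unfolded normal_word_def]
  proof
    assume "\<exists>h\<in>s1.H. n = [h]"
    then obtain c where c: "c \<in> carrier C" "n = [e1 c]" by blast
    then have fn: "map f n = [e2 c]" using glue_const nF by simp
    have one: "\<one>\<^bsub>C\<^esub> \<in> carrier C" using group.is_monoid[OF s1.group_C] monoid.one_closed by blast
    have "e1 c = \<one>\<^bsub>A1\<^esub> \<longleftrightarrow> c = \<one>\<^bsub>C\<^esub>" "e2 c = \<one>\<^bsub>A2\<^esub> \<longleftrightarrow> c = \<one>\<^bsub>C\<^esub>"
      using inj_on_eq_iff[OF s1.inj_e c(1) one] inj_on_eq_iff[OF s2.inj_e c(1) one] s1.one_A s2.one_A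
      by simp_all
    then show ?thesis using c fn by (auto simp: normal_word_def)
  next
    assume red: "reduced A1 B1 s1.H n"
    then have letters: "\<forall>x\<in>set n. x \<in> F \<and> x \<notin> s1.H" using nF unfolding reduced_def by auto
    have "f x \<in> (carrier A2 \<union> carrier B2) - s2.H" if "x \<in> set n" for x
    proof -
      have "x \<in> F" "x \<notin> s1.H" "x \<in> carrier A1 \<union> carrier B1"
        using that letters red unfolding reduced_def by auto
      then show ?thesis using glue_H_iff[of x] glue_carrier_A[of x] glue_carrier_B[of x] by auto
    qed
    then have "set (map f n) \<subseteq> (carrier A2 \<union> carrier B2) - s2.H" by auto
    moreover have "alternating A2 (map f n)"
      using red alternating_map[of A1 n f A2] letters glue_factor_iff unfolding reduced_def by auto
    ultimately have red2: "reduced A2 B2 s2.H (map f n)" using red unfolding reduced_def by auto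
    have "\<not> (\<exists>h\<in>s1.H. n = [h])" "\<not> (\<exists>h\<in>s2.H. map f n = [h])"
      "n \<noteq> [\<one>\<^bsub>A1\<^esub>]" "map f n \<noteq> [\<one>\<^bsub>A2\<^esub>]"
      using red red2 s1.one_in_H s2.one_in_H unfolding reduced_def by auto
    then show ?thesis using red2 unfolding normal_word_def by simp
  qed
  then show "normal_word A2 B2 s2.H (map f n)" "map f n = [\<one>\<^bsub>A2\<^esub>] \<longleftrightarrow> n = [\<one>\<^bsub>A1\<^esub>]"
    "(\<exists>h\<in>s2.H. map f n = [h]) \<longleftrightarrow> (\<exists>h\<in>s1.H. n = [h])" by simp_all
qed

lemma status_transfer:
  assumes n: "normal_word A1 B1 s1.H n" and w: "amal_rel A1 B1 w n" and nF: "set n \<subseteq> F"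
    and cert: "transports A1 B1 A2 B2 F w n"
  shows "amal_rel A1 B1 w [] \<longleftrightarrow> amal_rel A2 B2 (map f w) []"
    and "(\<exists>c\<in>carrier C. amal_rel A1 B1 w [e1 c]) \<longleftrightarrow> (\<exists>c\<in>carrier C. amal_rel A2 B2 (map f w) [e2 c])"
proof -
  have fw: "amal_rel A2 B2 (map f w) (map f n)"
    using cert glue_table_hom unfolding transports_def by blast
  show "amal_rel A1 B1 w [] \<longleftrightarrow> amal_rel A2 B2 (map f w) []"
    and "(\<exists>c\<in>carrier C. amal_rel A1 B1 w [e1 c]) \<longleftrightarrow> (\<exists>c\<in>carrier C. amal_rel A2 B2 (map f w) [e2 c])"
    using s1.status_normal_word[OF n w] s2.status_normal_word[OF glue_normal_word(1)[OF n nF] fw]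
      glue_normal_word(2,3)[OF n nF] by simp_all
qed

lemma formula_transfer:
  assumes lc: "lform_consts \<phi> \<subseteq> carrier C" and ws: "\<forall>i. ws i \<in> s1.L"
    and words: "\<And>w. w \<in> formula_words A1 B1 e1 ws \<phi> \<Longrightarrow> set w \<subseteq> F
      \<and> (amal_rel A1 B1 w [] \<longleftrightarrow> amal_rel A2 B2 (map f w) [])
      \<and> ((\<exists>c\<in>carrier C. amal_rel A1 B1 w [e1 c]) \<longleftrightarrow> (\<exists>c\<in>carrier C. amal_rel A2 B2 (map f w) [e2 c]))"
    and ws': "\<And>i. LVar i \<in> set (form_terms \<phi>) \<Longrightarrow> ws' i = map f (ws i)"
    and ws'L: "\<forall>i. ws' i \<in> s2.L"
  shows "word_sat C A1 B1 e1 ws \<phi> \<longleftrightarrow> word_sat C A2 B2 e2 ws' \<phi>"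
proof -
  let ?T = "set (form_terms \<phi>)"
  let ?W1 = "term_word A1 B1 e1 ws" and ?W2 = "term_word A2 B2 e2 ws'"
  have quot: "?W1 s @ word_inv A1 B1 (?W1 t) \<in> formula_words A1 B1 e1 ws \<phi>" if "s \<in> ?T" "t \<in> ?T" for s t
    using that unfolding formula_words_def by force
  have val: "?W1 t \<in> formula_words A1 B1 e1 ws \<phi>" if "t \<in> ?T" for t
    using that unfolding formula_words_def by blast
  have L1: "?W1 t \<in> s1.L" if "t \<in> ?T" for t
    using s1.formula_words_lists[OF ws lc] val[OF that] by blast
  have inv_F: "map f (word_inv A1 B1 (?W1 t)) = word_inv A2 B2 (map f (?W1 t))" if t: "t \<in> ?T" for t
  proof (rule map_word_inv, rule ballI)
    fix x assume "x \<in> set (?W1 t)"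
    then have "x \<in> F" "letter_inv A1 B1 x \<in> F" using words[OF quot[OF t t]] by (auto simp: word_inv_def)
    then show "f (letter_inv A1 B1 x) = letter_inv A2 B2 (f x)" by (rule glue_letter_inv)
  qed
  have W2: "?W2 u = map f (?W1 u)" if "u \<in> ?T" for u
    using that
  proof (induction u)
    case (LVar i) then show ?case using ws' by simp
  next
    case (LConst c)
    then have "c \<in> carrier C" using form_terms_consts[of "LConst c" \<phi>] lc by auto
    moreover have "e1 c \<in> F" using words[OF val[OF LConst]] by simp
    ultimately show ?case using glue_const by simp
  next
    case (LMul s t)
    then have "s \<in> ?T" "t \<in> ?T"
      using form_terms_closed[OF LMul.prems] subterms_self[of s] subterms_self[of t] by auto
    then show ?case using LMul.IH by simp
  next
    case (LInv t)
    then have "t \<in> ?T" using form_terms_closed[OF LInv.prems] subterms_self[of t] by auto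
    then show ?case using LInv.IH inv_F by simp
  qed
  have "word_sat C A1 B1 e1 ws \<psi> \<longleftrightarrow> word_sat C A2 B2 e2 ws' \<psi>" if "set (form_terms \<psi>) \<subseteq> ?T" for \<psi>
    using that
  proof (induction \<psi>)
    case (LEq s t)
    then have st: "s \<in> ?T" "t \<in> ?T" using subterms_self[of s] subterms_self[of t] by auto
    have L2: "?W2 s \<in> s2.L" "?W2 t \<in> s2.L"
      using W2 st partial_table_hom_lists[OF glue_table_hom _ F] words[OF val] by auto
    have "map f (?W1 s @ word_inv A1 B1 (?W1 t)) = ?W2 s @ word_inv A2 B2 (?W2 t)"
      using W2 st inv_F by simp
    then show ?case using s1.rel_iff_trivial_quotient[OF L1 L1, OF st] s2.rel_iff_trivial_quotient[OF L2]
      words[OF quot[OF st]] by simp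
  next
    case (LDelta t)
    then have "t \<in> ?T" using subterms_self[of t] by auto
    then show ?case using words[OF val] W2 by simp
  qed auto
  then show ?thesis by simp
qed

end

lemma lc_fin_equivE:
  assumes "lc_fin_equiv C G e H e'" "finite S" "S \<subseteq> carrier G"
  obtains T \<phi> where "T \<subseteq> carrier H" "lc_iso C G e H e' S T \<phi>"
  using assms unfolding lc_fin_equiv_def by blast

lemma ex_holds_transfer:
  assumes s1: "amal C A1 B1 e1" and s2: "amal C A2 B2 e2"
    and eA: "lc_fin_equiv C A1 e1 A2 e2" and eB: "lc_fin_equiv C B1 e1 B2 e2"
    and lc: "lform_consts \<phi> \<subseteq> carrier C"
    and holds: "ex_holds C (amal_prod A1 B1) (amal_emb A1 B1 e1) \<phi>"
  shows "ex_holds C (amal_prod A2 B2) (amal_emb A2 B2 e2) \<phi>"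
proof -
  interpret s1: amal C A1 B1 e1 by (rule s1)
  interpret s2: amal C A2 B2 e2 by (rule s2)
  obtain ws where ws: "\<forall>i. ws i \<in> s1.L" "word_sat C A1 B1 e1 ws \<phi>"
    using s1.ex_holds_iff_words[OF lc] holds by blast
  let ?W = "formula_words A1 B1 e1 ws \<phi>"
  have "\<exists>F. finite F \<and> F \<subseteq> carrier A1 \<union> carrier B1 \<and> (\<forall>w\<in>?W. set w \<subseteq> F
     \<and> (\<exists>n. normal_word A1 B1 s1.H n \<and> amal_rel A1 B1 w n \<and> set n \<subseteq> F \<and> transports A1 B1 A2 B2 F w n))"
    by (rule s1.finite_certificate[OF finite_formula_words s1.formula_words_lists[OF ws(1) lc]])
  then obtain F where F: "finite F" "F \<subseteq> carrier A1 \<union> carrier B1"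
    and cert: "\<And>w. w \<in> ?W \<Longrightarrow> set w \<subseteq> F \<and> (\<exists>n. normal_word A1 B1 s1.H n \<and> amal_rel A1 B1 w n
       \<and> set n \<subseteq> F \<and> transports A1 B1 A2 B2 F w n)"
    by blast
  obtain TA fa where A: "TA \<subseteq> carrier A2" "lc_iso C A1 e1 A2 e2 (F \<inter> carrier A1) TA fa"
    using lc_fin_equivE[OF eA] F(1) by blast
  obtain TB fb where B: "TB \<subseteq> carrier B2" "lc_iso C B1 e1 B2 e2 (F \<inter> carrier B1) TB fb"
    using lc_fin_equivE[OF eB] F(1) by blast
  interpret g: glued_isos C A1 B1 e1 A2 B2 e2 F TA TB fa fb
    using s1 s2 F(2) A B unfolding glued_isos_def glued_isos_axioms_def by blast
  have status: "set w \<subseteq> F \<and> (amal_rel A1 B1 w [] \<longleftrightarrow> amal_rel A2 B2 (map g.f w) [])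
      \<and> ((\<exists>c\<in>carrier C. amal_rel A1 B1 w [e1 c]) \<longleftrightarrow> (\<exists>c\<in>carrier C. amal_rel A2 B2 (map g.f w) [e2 c]))"
    if w: "w \<in> ?W" for w
  proof -
    obtain n where n: "normal_word A1 B1 s1.H n" "amal_rel A1 B1 w n" "set n \<subseteq> F"
      "transports A1 B1 A2 B2 F w n" using cert[OF w] by blast
    then show ?thesis using cert[OF w] g.status_transfer[OF n] by blast
  qed
  define ws' where "ws' i = (if LVar i \<in> set (form_terms \<phi>) then map g.f (ws i) else [])" for i
  have ws'L: "\<forall>i. ws' i \<in> s2.L"
  proof
    fix i show "ws' i \<in> s2.L"
    proof (cases "LVar i \<in> set (form_terms \<phi>)")
      case True
      then have "ws i \<in> ?W" unfolding formula_words_def by force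
      then show ?thesis
        using True status partial_table_hom_lists[OF g.glue_table_hom _ F(2)] unfolding ws'_def by simp
    qed (simp add: ws'_def)
  qed
  have "ws' i = map g.f (ws i)" if "LVar i \<in> set (form_terms \<phi>)" for i
    using that unfolding ws'_def by simp
  then have "word_sat C A1 B1 e1 ws \<phi> \<longleftrightarrow> word_sat C A2 B2 e2 ws' \<phi>"
    using g.formula_transfer[OF lc ws(1) status _ ws'L] by blast
  then show ?thesis using s2.ex_holds_iff_words[OF lc] ws ws'L by blast
qed

lemma fin_equiv_sym: "lc_fin_equiv C G e H e' \<Longrightarrow> lc_fin_equiv C H e' G e"
  unfolding lc_fin_equiv_def by blast

text \<open>Formulas of the language of groups mention neither constants nor delta, so their truth
  does not depend on the interpretation of these; hence existential equivalence in L_C implies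
  existential equivalence in the language of groups.\<close>

lemma teval_no_consts: "lterm_consts t = {} \<Longrightarrow> teval G e \<sigma> t = teval G e' \<sigma> t"
  by (induction t) auto

lemma fsat_group_form: "is_group_form \<phi> \<Longrightarrow> fsat G e D \<sigma> \<phi> = fsat G e' D' \<sigma> \<phi>"
  unfolding is_group_form_def by (induction \<phi>) (auto simp: teval_no_consts[of _ G e \<sigma> e'])

lemma ex_holds_group_form:
  assumes "is_group_form \<phi>"
  shows "ex_holds C G e \<phi> \<longleftrightarrow> (\<exists>\<sigma>. (\<forall>i. \<sigma> i \<in> carrier G) \<and> fsat G (\<lambda>_. undefined) {} \<sigma> \<phi>)"
  unfolding ex_holds_def using fsat_group_form[OF assms, of G e "e ` carrier C" _ "\<lambda>_. undefined" "{}"]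
  by simp

text \<open>The main theorem.\<close>
theorem mainTheorem7:
  fixes C :: "'c monoid"
    and A1 B1 :: "'a monoid" and e1 :: "'c \<Rightarrow> 'a"
    and A2 B2 :: "'b monoid" and e2 :: "'c \<Rightarrow> 'b"
  assumes "group C" and "carrier C \<noteq> {\<one>\<^bsub>C\<^esub>}"
    and "is_cgroup C A1 e1" and "is_cgroup C B1 e1"
    and "is_cgroup C A2 e2" and "is_cgroup C B2 e2"
    and "carrier A1 \<inter> carrier B1 = e1 ` carrier C"
    and "carrier A2 \<inter> carrier B2 = e2 ` carrier C"
    and "lc_fin_equiv C A1 e1 A2 e2"
    and "lc_fin_equiv C B1 e1 B2 e2"
  shows "lc_exist_equiv C (amal_prod A1 B1) (amal_emb A1 B1 e1) (amal_prod A2 B2) (amal_emb A2 B2 e2)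
       \<and> group_exist_equiv C (amal_prod A1 B1) (amal_prod A2 B2)"
proof -
  have s1: "amal C A1 B1 e1" and s2: "amal C A2 B2 e2" using assms by (simp_all add: amal_def)
  have lc: "lc_exist_equiv C (amal_prod A1 B1) (amal_emb A1 B1 e1) (amal_prod A2 B2) (amal_emb A2 B2 e2)"
    unfolding lc_exist_equiv_def is_lc_form_def
    using ex_holds_transfer[OF s1 s2 assms(9,10)]
      ex_holds_transfer[OF s2 s1 fin_equiv_sym[OF assms(9)] fin_equiv_sym[OF assms(10)]] by blast
  have "group_exist_equiv C (amal_prod A1 B1) (amal_prod A2 B2)"
    unfolding group_exist_equiv_def
  proof (intro allI impI)
    fix \<phi> :: "'c lform" assume g: "is_group_form \<phi>"
    then have "is_lc_form C \<phi>" by (simp add: is_group_form_def is_lc_form_def)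
    then have "ex_holds C (amal_prod A1 B1) (amal_emb A1 B1 e1) \<phi>
        \<longleftrightarrow> ex_holds C (amal_prod A2 B2) (amal_emb A2 B2 e2) \<phi>"
      using lc unfolding lc_exist_equiv_def by blast
    then show "(\<exists>\<sigma>. (\<forall>i. \<sigma> i \<in> carrier (amal_prod A1 B1)) \<and> fsat (amal_prod A1 B1) (\<lambda>_. undefined) {} \<sigma> \<phi>)
      \<longleftrightarrow> (\<exists>\<sigma>. (\<forall>i. \<sigma> i \<in> carrier (amal_prod A2 B2)) \<and> fsat (amal_prod A2 B2) (\<lambda>_. undefined) {} \<sigma> \<phi>)"
      by (simp add: ex_holds_group_form[OF g])
  qed
  with lc show ?thesis ..
qed

end
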